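(* Let $K$ be a field of characteristic $0$, $S=K[x_1,\dots,x_n]$, and let $I,J\subset S$ be Borel-fixed ideals, where $I$ has minimal monomial generators $f_1,\dots,f_m$ all of the same degree. Fix $t$ and write $$\operatorname{in}_>(Z_t(I,S/J))=\bigoplus_{{\bf u}\subset[m],\ \#{\bf u}=t} e_{\bf u}\otimes L_{\bf u}/J$$ with $L_{\bf u}\supseteq J$ monomial ideals. Then each $L_{\bf u}$ is Borel-fixed.
   Context: A monomial ideal is Borel-fixed if it is invariant under all invertible upper triangular linear changes of coordinates, equivalently (characteristic $0$): for every monomial $fx_j$ in the ideal and every $i<j$, $fx_i$ is in the ideal. Let $F=\bigoplus_{i=1}^m S(-\deg f_i)$ with basis $e_1,\dots,e_m$, $\phi(e_i)=f_i$; $K(I,S/J)=\bigwedge^\bullet F\otimes_S S/J$ is the Koszul complex (differential induced by $\phi$), and $Z_t(I,S/J)$ its module of cycles in position $t$. For ${\bf u}=\{u_1<\dots<u_t\}\subset[m]$, $e_{\bf u}=e_{u_1}\wedge\cdots\wedge e_{u_t}$. Term order: $>_{\rm rev}$ is the degree reverse lexicographic order with $x_1>\cdots>x_n$. For $i_1<\cdots<i_t$, $j_1<\cdots<j_t$, set $e_{i_1}\wedge\cdots\wedge e_{i_t}\succ e_{j_1}\wedge\cdots\wedge e_{j_t}$ if (i) $f_{i_1}\cdots f_{i_t}<_{\rm rev}f_{j_1}\cdots f_{j_t}$, or (ii) $f_{i_1}\cdots f_{i_t}=f_{j_1}\cdots f_{j_t}$ and $x_{i_1}\cdots x_{i_t}>_{\rm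 rev}x_{j_1}\cdots x_{j_t}$ (the index sets compared as monomials in formal variables $x_1>x_2>\cdots$ by degree reverse lex). On terms $e_{\bf u}v$ ($v$ a monomial) set $e_{\bf u}v>e_{{\bf u}'}v'$ if $e_{\bf u}\succ e_{{\bf u}'}$, or $e_{\bf u}=e_{{\bf u}'}$ and $v>_{\rm rev}v'$. Every element of $K_t(I,S/J)$ is uniquely a $K$-linear combination of terms $e_{\bf u}\otimes(v+J)$ with $v$ a monomial not in $J$; its initial term $\operatorname{in}_>(g)$ is the largest such term occurring, and $\operatorname{in}_>(N)$ for a submodule $N$ is the $S$-submodule generated by all $\operatorname{in}_>(g)$, $g\in N$; for $N=Z_t(I,S/J)$ it decomposes as displayed, where $L_{\bf u}$ is the ideal generated by $J$ and the monomials $v$ with $e_{\bf u}\otimes(v+J)\in \operatorname{in}_>(N)$. *)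

theory Defs
  imports Main "HOL-Library.Poly_Mapping"
begin

text \<open>Monomials in variables x_1,...,x_n are exponent vectors nat =>0 nat
  (support in 1..n); polynomials over the field 'a are finitely supported maps
  from monomials to 'a, with the convolution (polynomial) product.\<close>

type_synonym mon = "nat \<Rightarrow>\<^sub>0 nat"
type_synonym 'a mpoly = "mon \<Rightarrow>\<^sub>0 'a"

definition is_mon :: "nat \<Rightarrow> mon \<Rightarrow> bool" where
  "is_mon n v \<longleftrightarrow> Poly_Mapping.keys v \<subseteq> {1..n}"

definition var :: "nat \<Rightarrow> mon" where
  "var i = Poly_Mapping.single i 1"

definition mdeg :: "mon \<Rightarrow> nat" where
  "mdeg v = (\<Sum>k\<in>Poly_Mapping.keys v. Poly_Mapping.lookup v k)"

definition mdvd :: "mon \<Rightarrow> mon \<Rightarrow> bool" where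
  "mdvd v w \<longleftrightarrow> (\<exists>u. w = v + u)"

definition monom :: "mon \<Rightarrow> 'a::comm_ring_1 mpoly" where
  "monom v = Poly_Mapping.single v 1"

definition polyS :: "nat \<Rightarrow> 'a::comm_ring_1 mpoly set" where
  "polyS n = {p. \<forall>v\<in>Poly_Mapping.keys p. is_mon n v}"

definition is_ideal :: "nat \<Rightarrow> 'a::comm_ring_1 mpoly set \<Rightarrow> bool" where
  "is_ideal n I \<longleftrightarrow> I \<subseteq> polyS n \<and> 0 \<in> I \<and> (\<forall>p\<in>I. \<forall>q\<in>I. p + q \<in> I)
      \<and> (\<forall>s\<in>polyS n. \<forall>p\<in>I. s * p \<in> I)"

inductive_set ideal_gen :: "nat \<Rightarrow> 'a::comm_ring_1 mpoly set \<Rightarrow> 'a mpoly set"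
  for n :: nat and G :: "'a mpoly set" where
  ig_zero: "0 \<in> ideal_gen n G"
| ig_gen: "p \<in> G \<Longrightarrow> p \<in> ideal_gen n G"
| ig_add: "p \<in> ideal_gen n G \<Longrightarrow> q \<in> ideal_gen n G \<Longrightarrow> p + q \<in> ideal_gen n G"
| ig_mult: "s \<in> polyS n \<Longrightarrow> p \<in> ideal_gen n G \<Longrightarrow> s * p \<in> ideal_gen n G"

definition monomial_ideal :: "nat \<Rightarrow> 'a::comm_ring_1 mpoly set \<Rightarrow> bool" where
  "monomial_ideal n I \<longleftrightarrow> is_ideal n I \<and> (\<forall>p\<in>I. \<forall>v\<in>Poly_Mapping.keys p. monom v \<in> I)"

text \<open>Borel-fixed monomial ideal (characteristic 0 combinatorial characterization):
  f x_j \<in> I and i < j imply f x_i \<in> I.\<close>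
definition borel_fixed :: "nat \<Rightarrow> 'a::comm_ring_1 mpoly set \<Rightarrow> bool" where
  "borel_fixed n I \<longleftrightarrow> monomial_ideal n I \<and>
     (\<forall>v i j. is_mon n v \<longrightarrow> 1 \<le> i \<longrightarrow> i < j \<longrightarrow> j \<le> n \<longrightarrow>
        monom (v + var j) \<in> I \<longrightarrow> monom (v + var i) \<in> I)"

text \<open>Degree reverse lexicographic order with x_1 > x_2 > ...: strict "greater".\<close>
definition revlex_gt :: "mon \<Rightarrow> mon \<Rightarrow> bool" where
  "revlex_gt v w \<longleftrightarrow> mdeg v > mdeg w \<or>
     (mdeg v = mdeg w \<and> v \<noteq> w \<and>
        Poly_Mapping.lookup v (Max {k. Poly_Mapping.lookup v k \<noteq> Poly_Mapping.lookup w k}) < Poly_Mapping.lookup w (Max {k. Poly_Mapping.lookup v k \<noteq> Poly_Mapping.lookup w k}))"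

definition fprod :: "(nat \<Rightarrow> mon) \<Rightarrow> nat set \<Rightarrow> mon" where
  "fprod f u = (\<Sum>i\<in>u. f i)"

definition sqmon :: "nat set \<Rightarrow> mon" where
  "sqmon u = (\<Sum>i\<in>u. var i)"

definition e_gt :: "(nat \<Rightarrow> mon) \<Rightarrow> nat set \<Rightarrow> nat set \<Rightarrow> bool" where
  "e_gt f u u' \<longleftrightarrow> revlex_gt (fprod f u') (fprod f u) \<or>
     (fprod f u = fprod f u' \<and> revlex_gt (sqmon u) (sqmon u'))"

definition term_gt :: "(nat \<Rightarrow> mon) \<Rightarrow> nat set \<times> mon \<Rightarrow> nat set \<times> mon \<Rightarrow> bool" where
  "term_gt f a b \<longleftrightarrow> e_gt f (fst a) (fst b) \<or> (fst a = fst b \<and> revlex_gt (snd a) (snd b))"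

text \<open>Elements of K_t(I,S/J) are represented by their unique normal form:
  a map u \<mapsto> (polynomial with no monomial in J), supported on t-subsets of [m].
  nf J p drops the monomials of p lying in J (the canonical representative mod J).\<close>
definition nf :: "'a::comm_ring_1 mpoly set \<Rightarrow> 'a mpoly \<Rightarrow> 'a mpoly" where
  "nf J p = (\<Sum>v\<in>{v\<in>Poly_Mapping.keys p. monom v \<notin> J}. Poly_Mapping.single v (Poly_Mapping.lookup p v))"

type_synonym 'a kelem = "nat set \<Rightarrow> 'a mpoly"

definition koszul :: "nat \<Rightarrow> nat \<Rightarrow> 'a::comm_ring_1 mpoly set \<Rightarrow> nat \<Rightarrow> 'a kelem set" where
  "koszul n m J t = {g. (\<forall>u. \<not> (u \<subseteq> {1..m} \<and> card u = t) \<longrightarrow> g u = 0) \<and>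
      (\<forall>u. g u \<in> polyS n \<and> nf J (g u) = g u)}"

text \<open>Koszul differential: e_u \<mapsto> sum_k (-1)^(k-1) f_(u_k) e_(u - u_k), reduced mod J.\<close>
definition kdiff :: "nat \<Rightarrow> (nat \<Rightarrow> mon) \<Rightarrow> 'a::comm_ring_1 mpoly set \<Rightarrow> 'a kelem \<Rightarrow> 'a kelem" where
  "kdiff m f J g = (\<lambda>w. nf J (\<Sum>i\<in>{1..m} - w.
       (-1) ^ card {j\<in>w. j < i} * monom (f i) * g (insert i w)))"

definition cycles :: "nat \<Rightarrow> nat \<Rightarrow> (nat \<Rightarrow> mon) \<Rightarrow> 'a::comm_ring_1 mpoly set \<Rightarrow> nat \<Rightarrow> 'a kelem set" where
  "cycles n m f J t = {g \<in> koszul n m J t. kdiff m f J g = (\<lambda>_. 0)}"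

definition kterms :: "'a::comm_ring_1 kelem \<Rightarrow> (nat set \<times> mon) set" where
  "kterms g = {(u, v). Poly_Mapping.lookup (g u) v \<noteq> 0}"

definition init_term :: "(nat \<Rightarrow> mon) \<Rightarrow> 'a::comm_ring_1 kelem \<Rightarrow> nat set \<times> mon" where
  "init_term f g = (THE a. a \<in> kterms g \<and> (\<forall>b\<in>kterms g. b \<noteq> a \<longrightarrow> term_gt f a b))"

definition term_elem :: "'a::comm_ring_1 mpoly set \<Rightarrow> nat set \<times> mon \<Rightarrow> 'a kelem" where
  "term_elem J a = (\<lambda>u. if u = fst a then nf J (monom (snd a)) else 0)"

definition ksmult :: "'a::comm_ring_1 mpoly set \<Rightarrow> 'a mpoly \<Rightarrow> 'a kelem \<Rightarrow> 'a kelem" where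
  "ksmult J s g = (\<lambda>u. nf J (s * g u))"

inductive_set submod_gen :: "nat \<Rightarrow> 'a::comm_ring_1 mpoly set \<Rightarrow> 'a kelem set \<Rightarrow> 'a kelem set"
  for n :: nat and J :: "'a mpoly set" and G :: "'a kelem set" where
  sg_zero: "(\<lambda>_. 0) \<in> submod_gen n J G"
| sg_gen: "g \<in> G \<Longrightarrow> g \<in> submod_gen n J G"
| sg_add: "g \<in> submod_gen n J G \<Longrightarrow> h \<in> submod_gen n J G \<Longrightarrow> (\<lambda>u. g u + h u) \<in> submod_gen n J G"
| sg_mult: "s \<in> polyS n \<Longrightarrow> g \<in> submod_gen n J G \<Longrightarrow> ksmult J s g \<in> submod_gen n J G"

definition init_module :: "nat \<Rightarrow> (nat \<Rightarrow> mon) \<Rightarrow> 'a::comm_ring_1 mpoly set \<Rightarrow> 'a kelem set \<Rightarrow> 'a kelem set" where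
  "init_module n f J N = submod_gen n J {term_elem J (init_term f g) | g. g \<in> N \<and> g \<noteq> (\<lambda>_. 0)}"

definition L_ideal :: "nat \<Rightarrow> (nat \<Rightarrow> mon) \<Rightarrow> 'a::comm_ring_1 mpoly set \<Rightarrow> 'a kelem set \<Rightarrow> nat set \<Rightarrow> 'a mpoly set" where
  "L_ideal n f J N u = ideal_gen n (J \<union> {monom v | v. is_mon n v \<and> term_elem J (u, v) \<in> init_module n f J N})"

end

theory Submission
  imports Defs
begin

text \<open>The Koszul complex is multigraded, so a cycle is a sum of homogeneous cycles, and its
  component of multidegree \<open>d\<close> is described by the coefficients \<open>c\<^sub>w\<close> of the terms
  \<open>e\<^sub>w \<otimes> x\<^bsup>d - f\<^sub>w\<^esup>\<close>. Suppose \<open>e\<^sub>u \<otimes> v x\<^sub>j\<close> is an initial term and \<open>i < j\<close>.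
  Because \<open>I\<close> is Borel-fixed and generated in one degree, every generator \<open>f\<^sub>k\<close> divisible by
  \<open>x\<^sub>j\<close> has a unique partner with \<open>f\<^sub>k x\<^sub>i = f\<^sub>l x\<^sub>j\<close>, so the derivation
  \<open>x\<^sub>i \<partial>/\<partial>x\<^sub>j\<close> of \<open>S\<close> lifts to the Koszul complex and commutes with its differential;
  because \<open>J\<close> is Borel-fixed, it maps cycles modulo \<open>J\<close> of degree \<open>d\<close> to cycles of degree
  \<open>d x\<^sub>i / x\<^sub>j\<close>. It creates no term above \<open>e\<^sub>u\<close> and multiplies the coefficient of \<open>e\<^sub>u\<close>
  by the exponent of \<open>x\<^sub>j\<close> in \<open>v x\<^sub>j\<close>, which is nonzero in characteristic \<open>0\<close>. Hence
  \<open>e\<^sub>u \<otimes> v x\<^sub>i\<close> is again an initial term unless \<open>v x\<^sub>i \<in> J\<close>.\<close>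

lemma poly_mapping_sum_single: "p = (\<Sum>k\<in>Poly_Mapping.keys p. Poly_Mapping.single k (Poly_Mapping.lookup p k))"
  by (rule poly_mapping_eqI) (simp add: lookup_sum lookup_single when_def in_keys_iff sum.If_cases)

lemma sum_single: "(\<Sum>x\<in>A. Poly_Mapping.single k (h x)) = Poly_Mapping.single k (sum h A)"
  by (induction A rule: infinite_finite_induct) (simp_all add: single_add)

lemma lookup_single_mult:
  "Poly_Mapping.lookup (Poly_Mapping.single a c * (q :: 'b::comm_ring_1 mpoly)) r =
     (if mdvd a r then c * Poly_Mapping.lookup q (r - a) else 0)"
proof -
  have "Poly_Mapping.single a c * q =
      (\<Sum>k\<in>Poly_Mapping.keys q. Poly_Mapping.single (a + k) (c * Poly_Mapping.lookup q k))"
    by (subst poly_mapping_sum_single[of q]) (simp add: sum_distrib_left mult_single)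
  then have "Poly_Mapping.lookup (Poly_Mapping.single a c * q) r =
      (\<Sum>k\<in>Poly_Mapping.keys q. if k = r - a \<and> mdvd a r then c * Poly_Mapping.lookup q k else 0)"
    by (auto simp: lookup_sum lookup_single when_def mdvd_def intro!: sum.cong)
  also have "\<dots> = (if mdvd a r then c * Poly_Mapping.lookup q (r - a) else 0)"
    by (auto simp: in_keys_iff)
  finally show ?thesis .
qed

lemma lookup_monom_mult:
  "Poly_Mapping.lookup (monom a * (q :: 'b::comm_ring_1 mpoly)) r =
     (if mdvd a r then Poly_Mapping.lookup q (r - a) else 0)"
  unfolding monom_def by (simp add: lookup_single_mult)

lemma monom_mult: "(monom a :: 'b::comm_ring_1 mpoly) * monom b = monom (a + b)"
  by (simp add: monom_def mult_single)

lemma keys_monom [simp]: "Poly_Mapping.keys (monom v :: 'b::comm_ring_1 mpoly) = {v}"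
  by (simp add: monom_def)

lemma monom_polyS [simp]: "(monom v :: 'b::comm_ring_1 mpoly) \<in> polyS n \<longleftrightarrow> is_mon n v"
  by (simp add: polyS_def)

lemma neg_one_power_mpoly: "((-1) ^ k :: 'b::comm_ring_1 mpoly) = Poly_Mapping.single 0 ((-1) ^ k)"
  by (induction k) (simp_all add: mult_single single_uminus)

lemma lookup_neg_one_power_mult:
  "Poly_Mapping.lookup (((-1) ^ k :: 'b::comm_ring_1 mpoly) * p) r = (-1) ^ k * Poly_Mapping.lookup p r"
  unfolding neg_one_power_mpoly by (simp add: lookup_single_mult mdvd_def)

lemma lookup_nf: "Poly_Mapping.lookup (nf J p) v = (if monom v \<in> J then 0 else Poly_Mapping.lookup p v)"
proof -
  have "Poly_Mapping.lookup (nf J p) v =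
      (\<Sum>x\<in>{v \<in> Poly_Mapping.keys p. monom v \<notin> J}. if x = v then Poly_Mapping.lookup p x else 0)"
    by (simp add: nf_def lookup_sum lookup_single when_def eq_commute)
  then show ?thesis
    by (auto simp: in_keys_iff)
qed

lemma nf_zero [simp]: "nf J 0 = 0"
  by (rule poly_mapping_eqI) (simp add: lookup_nf)

lemma nf_single: "nf J (Poly_Mapping.single v c) = (if monom v \<in> J then 0 else Poly_Mapping.single v c)"
  by (rule poly_mapping_eqI) (auto simp: lookup_nf lookup_single when_def)

lemma in_keys_nf: "v \<in> Poly_Mapping.keys (nf J p) \<Longrightarrow> monom v \<notin> J"
  by (auto simp: in_keys_iff lookup_nf split: if_splits)

lemma mdvd_refl [simp]: "mdvd a a"
  unfolding mdvd_def by (rule exI[of _ 0]) simp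

lemma mdvd_add_right [simp]: "mdvd a (a + b)"
  unfolding mdvd_def by blast

lemma mdvd_add_left [simp]: "mdvd a (b + a)"
  unfolding mdvd_def by (metis add.commute)

lemma mdvd_trans: "mdvd a b \<Longrightarrow> mdvd b c \<Longrightarrow> mdvd a c"
  unfolding mdvd_def by (metis add.assoc)

lemma mdvd_add_leftI: "mdvd a b \<Longrightarrow> mdvd a (c + b)"
  unfolding mdvd_def by (metis add.assoc add.commute)

lemma mdvd_add_cancel_right [simp]: "mdvd (a + c) (b + c) \<longleftrightarrow> mdvd a (b :: mon)"
  unfolding mdvd_def by (metis add.assoc add.commute add_right_cancel)

lemma add_diff_mdvd: "mdvd a b \<Longrightarrow> a + (b - a) = (b :: mon)"
  unfolding mdvd_def by auto

lemma lookup_var: "Poly_Mapping.lookup (var i) k = (if k = i then 1 else 0)"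
  by (simp add: var_def lookup_single)

lemma var_inject [simp]: "var i = var j \<longleftrightarrow> i = j"
  by (metis lookup_var one_neq_zero)

lemma exists_var_summand: "Poly_Mapping.lookup a j \<noteq> 0 \<Longrightarrow> \<exists>b. a = b + var j"
  by (rule exI[of _ "a - var j"]) (rule poly_mapping_eqI, simp add: lookup_add lookup_minus lookup_var)

lemma add_var_eq_add_cases:
  assumes "v + var j = w + r"
  obtains r' where "v = w + r'" | w1 where "w = w1 + var j" "v = w1 + r"
proof (cases "Poly_Mapping.lookup r j = 0")
  case False
  then obtain r' where r': "r = r' + var j"
    using exists_var_summand by blast
  with assms have "v = w + r'"
    by (simp add: add.assoc[symmetric])
  then show ?thesis
    by (rule that(1))
next
  case True
  have "Poly_Mapping.lookup (v + var j) j = Poly_Mapping.lookup (w + r) j"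
    using assms by (rule arg_cong)
  with True have "Poly_Mapping.lookup w j \<noteq> 0"
    by (simp add: lookup_add lookup_var)
  then obtain w1 where w1: "w = w1 + var j"
    using exists_var_summand by blast
  with assms have "v + var j = (w1 + r) + var j"
    by (simp add: ac_simps)
  then show ?thesis
    using that(2)[OF w1] by simp
qed

lemma is_mon_add [simp]: "is_mon n (a + b) \<longleftrightarrow> is_mon n a \<and> is_mon n b"
proof -
  have "Poly_Mapping.keys (a + b) = Poly_Mapping.keys a \<union> Poly_Mapping.keys (b :: mon)"
    by (auto simp: in_keys_iff lookup_add)
  then show ?thesis
    by (auto simp: is_mon_def)
qed

lemma is_mon_diff: "is_mon n a \<Longrightarrow> is_mon n (a - b)"
  unfolding is_mon_def by (auto simp: in_keys_iff lookup_minus)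

lemma is_mon_zero [simp]: "is_mon n 0"
  by (simp add: is_mon_def)

lemma is_mon_var [simp]: "is_mon n (var i) \<longleftrightarrow> 1 \<le> i \<and> i \<le> n"
  by (simp add: is_mon_def var_def)

lemma is_mon_fprod: "\<forall>i\<in>u. is_mon n (f i) \<Longrightarrow> is_mon n (fprod f u)"
  unfolding fprod_def by (induction u rule: infinite_finite_induct) auto

lemma polyS_zero [simp]: "0 \<in> polyS n"
  by (simp add: polyS_def)

lemma polyS_add: "p \<in> polyS n \<Longrightarrow> q \<in> polyS n \<Longrightarrow> p + q \<in> polyS n"
  unfolding polyS_def using keys_add by fastforce

lemma polyS_mult: "p \<in> polyS n \<Longrightarrow> q \<in> polyS n \<Longrightarrow> p * q \<in> polyS n"
  unfolding polyS_def using keys_mult by fastforce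

lemma mdeg_add: "mdeg (a + b) = mdeg a + mdeg b"
proof -
  have mdeg_on: "mdeg v = sum (Poly_Mapping.lookup v) K"
    if "finite K" "Poly_Mapping.keys v \<subseteq> K" for v K
    unfolding mdeg_def using that by (intro sum.mono_neutral_left) (auto simp: in_keys_iff)
  let ?K = "Poly_Mapping.keys a \<union> Poly_Mapping.keys b"
  have "Poly_Mapping.keys (a + b) \<subseteq> ?K"
    by (auto simp: in_keys_iff lookup_add)
  then show ?thesis
    by (simp add: mdeg_on[of ?K] lookup_add sum.distrib)
qed

lemma mdeg_eq_0_iff: "mdeg a = 0 \<longleftrightarrow> a = 0"
  unfolding mdeg_def by (auto simp: in_keys_iff intro!: poly_mapping_eqI)

lemma mdeg_var [simp]: "mdeg (var i) = 1"
  by (simp add: mdeg_def var_def)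

lemma mdvd_mdeg_antisym: "mdvd a b \<Longrightarrow> mdeg a = mdeg b \<Longrightarrow> a = b"
  unfolding mdvd_def by (auto simp: mdeg_add mdeg_eq_0_iff)

lemma fprod_insert: "finite s \<Longrightarrow> i \<notin> s \<Longrightarrow> fprod f (insert i s) = f i + fprod f s"
  unfolding fprod_def by simp

lemma fprod_exchange:
  assumes "finite w" "l \<in> w" "k \<notin> w"
  shows "fprod f (insert k (w - {l})) + f l = fprod f w + f k"
proof -
  have "fprod f w = f l + fprod f (w - {l})"
    using assms by (metis fprod_insert finite_Diff insert_Diff Diff_iff singletonI)
  moreover have "fprod f (insert k (w - {l})) = f k + fprod f (w - {l})"
    using assms by (simp add: fprod_insert)
  ultimately show ?thesis
    by (simp add: ac_simps)
qed

lemma fprod_exchange_var: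
  assumes "finite w" "l \<in> w" "k \<notin> w" "f k + var i = f l + var j"
  shows "fprod f (insert k (w - {l})) + var i = fprod f w + var j"
proof -
  have "fprod f (insert k (w - {l})) + var i + f l = fprod f w + (f k + var i)"
    using fprod_exchange[OF assms(1-3), of f] by (simp add: ac_simps)
  also have "\<dots> = fprod f w + var j + f l"
    unfolding assms(4) by (simp add: ac_simps)
  finally show ?thesis
    by simp
qed

lemma fprod_insert_diff:
  assumes "finite s" "i \<notin> s" "mdvd (fprod f (insert i s)) d"
  shows "d - fprod f s = f i + (d - fprod f (insert i s))"
proof -
  have fi: "fprod f (insert i s) = f i + fprod f s"
    using assms(1,2) by (rule fprod_insert)
  then obtain r where r: "d = f i + fprod f s + r"
    using assms(3) unfolding mdvd_def by auto
  then have "d = fprod f s + (f i + r)"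
    by (simp add: ac_simps)
  then show ?thesis
    unfolding fi using r by (metis add_diff_cancel_left')
qed

section \<open>The term order\<close>

lemma finite_lookup_diff: "finite {k. Poly_Mapping.lookup v k \<noteq> Poly_Mapping.lookup (w :: mon) k}"
  by (rule finite_subset[of _ "Poly_Mapping.keys v \<union> Poly_Mapping.keys w"]) (auto simp: in_keys_iff)

lemma revlex_Max_diff:
  assumes "Poly_Mapping.lookup v k \<noteq> Poly_Mapping.lookup (w :: mon) k"
    and "\<forall>k'>k. Poly_Mapping.lookup v k' = Poly_Mapping.lookup w k'"
  shows "Max {k. Poly_Mapping.lookup v k \<noteq> Poly_Mapping.lookup w k} = k"
proof (rule Max_eqI[OF finite_lookup_diff])
  show "y \<le> k" if "y \<in> {k. Poly_Mapping.lookup v k \<noteq> Poly_Mapping.lookup w k}" for y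
    using that assms(2) not_le by auto
qed (use assms(1) in simp)

lemma exists_last_diff:
  assumes "v \<noteq> (w :: mon)"
  shows "\<exists>k. Poly_Mapping.lookup v k \<noteq> Poly_Mapping.lookup w k \<and>
      (\<forall>k'>k. Poly_Mapping.lookup v k' = Poly_Mapping.lookup w k')"
proof -
  let ?D = "{k. Poly_Mapping.lookup v k \<noteq> Poly_Mapping.lookup w k}"
  have "?D \<noteq> {}"
  proof
    assume "?D = {}"
    then have "v = w"
      by (intro poly_mapping_eqI) blast
    with assms show False
      by simp
  qed
  then have "Max ?D \<in> ?D"
    using Max_in[OF finite_lookup_diff] by blast
  moreover have "k' \<notin> ?D" if "Max ?D < k'" for k'
    using that Max_ge[OF finite_lookup_diff[of v w], of k'] by auto
  ultimately show ?thesis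
    by blast
qed

lemma revlex_gt_iff:
  "revlex_gt v w \<longleftrightarrow> mdeg w < mdeg v \<or> (mdeg v = mdeg w \<and>
     (\<exists>k. Poly_Mapping.lookup v k < Poly_Mapping.lookup w k \<and>
          (\<forall>k'>k. Poly_Mapping.lookup v k' = Poly_Mapping.lookup w k')))"
proof -
  let ?k = "Max {k. Poly_Mapping.lookup v k \<noteq> Poly_Mapping.lookup w k}"
  have "v \<noteq> w \<and> Poly_Mapping.lookup v ?k < Poly_Mapping.lookup w ?k \<longleftrightarrow>
      (\<exists>k. Poly_Mapping.lookup v k < Poly_Mapping.lookup w k \<and>
          (\<forall>k'>k. Poly_Mapping.lookup v k' = Poly_Mapping.lookup w k'))"
  proof
    assume lt: "v \<noteq> w \<and> Poly_Mapping.lookup v ?k < Poly_Mapping.lookup w ?k"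
    then obtain k where k: "Poly_Mapping.lookup v k \<noteq> Poly_Mapping.lookup w k"
      "\<forall>k'>k. Poly_Mapping.lookup v k' = Poly_Mapping.lookup w k'"
      using exists_last_diff by blast
    moreover have "?k = k"
      using revlex_Max_diff[OF k] .
    ultimately show "\<exists>k. Poly_Mapping.lookup v k < Poly_Mapping.lookup w k \<and>
        (\<forall>k'>k. Poly_Mapping.lookup v k' = Poly_Mapping.lookup w k')"
      using lt by auto
  next
    assume "\<exists>k. Poly_Mapping.lookup v k < Poly_Mapping.lookup w k \<and>
        (\<forall>k'>k. Poly_Mapping.lookup v k' = Poly_Mapping.lookup w k')"
    then obtain k where k: "Poly_Mapping.lookup v k < Poly_Mapping.lookup w k"
      "\<forall>k'>k. Poly_Mapping.lookup v k' = Poly_Mapping.lookup w k'"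
      by blast
    then have "?k = k"
      by (intro revlex_Max_diff) auto
    with k show "v \<noteq> w \<and> Poly_Mapping.lookup v ?k < Poly_Mapping.lookup w ?k"
      by auto
  qed
  then show ?thesis
    unfolding revlex_gt_def by (simp only:)
qed

lemma revlex_gt_irrefl: "\<not> revlex_gt v v"
  unfolding revlex_gt_def by simp

lemma revlex_gt_trans:
  assumes "revlex_gt a b" "revlex_gt b c"
  shows "revlex_gt a c"
proof (cases "mdeg a = mdeg b \<and> mdeg b = mdeg c")
  case True
  then obtain k1 k2 where
    k1: "Poly_Mapping.lookup a k1 < Poly_Mapping.lookup b k1"
      "\<forall>k'>k1. Poly_Mapping.lookup a k' = Poly_Mapping.lookup b k'" and
    k2: "Poly_Mapping.lookup b k2 < Poly_Mapping.lookup c k2"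
      "\<forall>k'>k2. Poly_Mapping.lookup b k' = Poly_Mapping.lookup c k'"
    using assms unfolding revlex_gt_iff by auto
  have "Poly_Mapping.lookup a (max k1 k2) < Poly_Mapping.lookup c (max k1 k2)"
    using k1 k2 by (cases k1 k2 rule: linorder_cases) auto
  moreover have "\<forall>k'>max k1 k2. Poly_Mapping.lookup a k' = Poly_Mapping.lookup c k'"
    using k1(2) k2(2) by simp
  ultimately show ?thesis
    using True unfolding revlex_gt_iff by auto
next
  case False
  with assms show ?thesis
    unfolding revlex_gt_def by auto
qed

lemma revlex_gt_total:
  assumes "a \<noteq> b"
  shows "revlex_gt a b \<or> revlex_gt b a"
proof -
  obtain k where k: "Poly_Mapping.lookup a k \<noteq> Poly_Mapping.lookup b k"
    "\<forall>k'>k. Poly_Mapping.lookup a k' = Poly_Mapping.lookup b k'"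
    using exists_last_diff[OF assms] by blast
  show ?thesis
  proof (cases "mdeg a = mdeg b")
    case True
    then show ?thesis
    proof (cases "Poly_Mapping.lookup a k < Poly_Mapping.lookup b k")
      case True
      with k(2) \<open>mdeg a = mdeg b\<close> show ?thesis
        unfolding revlex_gt_iff by blast
    next
      case False
      with k have "Poly_Mapping.lookup b k < Poly_Mapping.lookup a k"
        "\<forall>k'>k. Poly_Mapping.lookup b k' = Poly_Mapping.lookup a k'"
        by auto
      with \<open>mdeg a = mdeg b\<close> show ?thesis
        unfolding revlex_gt_iff by auto
    qed
  qed (auto simp: revlex_gt_iff)
qed

lemma revlex_gt_var_exchange:
  assumes "c + var j = a + var i" "i < j"
  shows "revlex_gt c a"
proof -
  have lookups: "Poly_Mapping.lookup c k + (if k = j then 1 else 0) =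
      Poly_Mapping.lookup a k + (if k = i then 1 else 0)" for k
    using arg_cong[OF assms(1), of "\<lambda>p. Poly_Mapping.lookup p k"] by (simp add: lookup_add lookup_var)
  have "Poly_Mapping.lookup c j < Poly_Mapping.lookup a j"
    using lookups[of j] assms(2) by simp
  moreover have "\<forall>k'>j. Poly_Mapping.lookup c k' = Poly_Mapping.lookup a k'"
  proof (intro allI impI)
    fix k' assume "j < k'"
    then show "Poly_Mapping.lookup c k' = Poly_Mapping.lookup a k'"
      using lookups[of k'] assms(2) by simp
  qed
  moreover have "mdeg c = mdeg a"
    using arg_cong[OF assms(1), of mdeg] by (simp add: mdeg_add)
  ultimately show ?thesis
    unfolding revlex_gt_iff by blast
qed

lemma e_gt_irrefl: "\<not> e_gt f u u"
  unfolding e_gt_def using revlex_gt_irrefl by blast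

lemma e_gt_trans: "e_gt f a b \<Longrightarrow> e_gt f b c \<Longrightarrow> e_gt f a c"
  unfolding e_gt_def by (auto intro: revlex_gt_trans)

lemma e_gt_asym: "e_gt f a b \<Longrightarrow> \<not> e_gt f b a"
  using e_gt_trans e_gt_irrefl by blast

lemma sqmon_inj:
  assumes "finite u" "finite w" "sqmon u = sqmon w"
  shows "u = w"
proof (rule set_eqI)
  fix x
  have "Poly_Mapping.lookup (sqmon u) x = Poly_Mapping.lookup (sqmon w) x"
    using assms(3) by simp
  then have "(if x \<in> u then 1 else 0) = (if x \<in> w then (1::nat) else 0)"
    using assms(1,2) by (simp add: sqmon_def lookup_sum lookup_var)
  then show "x \<in> u \<longleftrightarrow> x \<in> w"
    by (auto split: if_splits)
qed

lemma e_gt_total: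
  assumes "finite u" "finite w" "u \<noteq> w"
  shows "e_gt f u w \<or> e_gt f w u"
proof (cases "fprod f u = fprod f w")
  case True
  then have "sqmon u \<noteq> sqmon w"
    using sqmon_inj assms by blast
  with True show ?thesis
    using revlex_gt_total unfolding e_gt_def by blast
qed (use revlex_gt_total in \<open>auto simp: e_gt_def\<close>)

lemma term_gt_irrefl: "\<not> term_gt f a a"
  unfolding term_gt_def using e_gt_irrefl revlex_gt_irrefl by blast

lemma term_gt_trans:
  assumes "term_gt f a b" "term_gt f b c"
  shows "term_gt f a c"
  using assms unfolding term_gt_def
  by (elim disjE conjE) (simp_all add: e_gt_trans[of f "fst a" "fst b" "fst c"] revlex_gt_trans[of "snd a" "snd b" "snd c"])

lemma term_gt_asym: "term_gt f a b \<Longrightarrow> \<not> term_gt f b a"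
  using term_gt_trans term_gt_irrefl by blast

lemma term_gt_total:
  assumes "finite (fst a)" "finite (fst b)" "a \<noteq> b"
  shows "term_gt f a b \<or> term_gt f b a"
proof (cases "fst a = fst b")
  case True
  then have "snd a \<noteq> snd b"
    using assms(3) prod.expand by blast
  with True show ?thesis
    using revlex_gt_total unfolding term_gt_def by blast
qed (use e_gt_total assms in \<open>auto simp: term_gt_def\<close>)

lemma finite_has_greatest_wrt:
  assumes "finite A" "A \<noteq> {}"
    and "\<And>a. \<not> r a a" "\<And>a b c. r a b \<Longrightarrow> r b c \<Longrightarrow> r a c"
    and "\<And>a b. a \<in> A \<Longrightarrow> b \<in> A \<Longrightarrow> a \<noteq> b \<Longrightarrow> r a b \<or> r b a"
  shows "\<exists>a\<in>A. \<forall>b\<in>A. b \<noteq> a \<longrightarrow> r a b"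
  using assms(1,2,5)
proof (induction A rule: finite_ne_induct)
  case (insert x F)
  have "\<exists>a\<in>F. \<forall>b\<in>F. b \<noteq> a \<longrightarrow> r a b"
    by (rule insert.IH) (simp add: insert.prems)
  then obtain a where a: "a \<in> F" "\<forall>b\<in>F. b \<noteq> a \<longrightarrow> r a b"
    by blast
  show ?case
  proof (cases "r a x")
    case True
    with a show ?thesis
      by blast
  next
    case False
    then have "r x a"
      using insert.prems[of a x] insert.hyps a(1) by blast
    have "r x b" if "b \<in> F" for b
      using a \<open>r x a\<close> assms(4)[OF \<open>r x a\<close>, of b] that by (cases "b = a") simp_all
    then show ?thesis
      by blast
  qed
qed simp

lemma init_term_eqI:
  assumes "a \<in> kterms g" "\<forall>b\<in>kterms g. b \<noteq> a \<longrightarrow> term_gt f a b"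
  shows "init_term f g = a"
  unfolding init_term_def
proof (rule the_equality)
  fix x
  assume x: "x \<in> kterms g \<and> (\<forall>b\<in>kterms g. b \<noteq> x \<longrightarrow> term_gt f x b)"
  show "x = a"
  proof (rule ccontr)
    assume "x \<noteq> a"
    with x assms have "term_gt f x a" "term_gt f a x"
      by auto
    then show False
      using term_gt_asym by blast
  qed
qed (use assms in blast)

lemma kterms_koszul:
  assumes "g \<in> koszul n m J t" "(w, x) \<in> kterms g"
  shows "w \<subseteq> {1..m}" "card w = t" "is_mon n x" "monom x \<notin> J"
proof -
  have x: "x \<in> Poly_Mapping.keys (g w)"
    using assms(2) by (simp add: kterms_def in_keys_iff)
  then have "g w \<noteq> 0"
    by auto
  with assms(1) show "w \<subseteq> {1..m}" "card w = t"
    unfolding koszul_def by blast+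
  have "g w \<in> polyS n" "nf J (g w) = g w"
    using assms(1) unfolding koszul_def by blast+
  with x show "is_mon n x" "monom x \<notin> J"
    unfolding polyS_def using in_keys_nf[of x J "g w"] by auto
qed

lemma init_term_greatest:
  assumes "g \<in> koszul n m J t" "g \<noteq> (\<lambda>_. 0)"
  shows "init_term f g \<in> kterms g" "\<forall>b\<in>kterms g. b \<noteq> init_term f g \<longrightarrow> term_gt f (init_term f g) b"
proof -
  have "kterms g \<subseteq> (\<Union>w\<in>Pow {1..m}. {w} \<times> Poly_Mapping.keys (g w))"
    using kterms_koszul(1)[OF assms(1)] by (force simp: kterms_def in_keys_iff)
  then have "finite (kterms g)"
    by (rule finite_subset) auto
  moreover have "kterms g \<noteq> {}"
  proof -
    obtain w where "g w \<noteq> 0"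
      using assms(2) by blast
    then obtain x where "Poly_Mapping.lookup (g w) x \<noteq> 0"
      using poly_mapping_eqI[of "g w" 0] by auto
    then show ?thesis
      by (auto simp: kterms_def)
  qed
  moreover have "finite (fst a)" if "a \<in> kterms g" for a
    using kterms_koszul(1)[OF assms(1), of "fst a" "snd a"] that finite_subset by auto
  ultimately obtain a where "a \<in> kterms g" "\<forall>b\<in>kterms g. b \<noteq> a \<longrightarrow> term_gt f a b"
    using finite_has_greatest_wrt[of "kterms g" "term_gt f"] term_gt_irrefl term_gt_trans term_gt_total
    by blast
  moreover have "init_term f g = a"
    using calculation by (rule init_term_eqI)
  ultimately show "init_term f g \<in> kterms g"
    "\<forall>b\<in>kterms g. b \<noteq> init_term f g \<longrightarrow> term_gt f (init_term f g) b"
    by simp_all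
qed

section \<open>Monomial ideals\<close>

lemma ideal_gen_keys_closed:
  assumes G: "\<forall>g\<in>G. g \<in> polyS n \<and> (\<forall>v\<in>Poly_Mapping.keys g. P v)"
    and P_mult: "\<forall>v s. P v \<longrightarrow> is_mon n s \<longrightarrow> P (s + v)"
    and p: "p \<in> ideal_gen n G"
  shows "p \<in> polyS n \<and> (\<forall>v\<in>Poly_Mapping.keys p. P v)"
  using p
proof (induction rule: ideal_gen.induct)
  case (ig_add p q)
  then show ?case
    using keys_add[of p q] by (auto intro: polyS_add)
next
  case (ig_mult s p)
  have "P v" if v: "v \<in> Poly_Mapping.keys (s * p)" for v
  proof -
    obtain a b where "v = a + b" "a \<in> Poly_Mapping.keys s" "b \<in> Poly_Mapping.keys p"
      using v keys_mult by blast
    moreover have "is_mon n a"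
      using ig_mult.hyps \<open>a \<in> _\<close> unfolding polyS_def by blast
    ultimately show "P v"
      using P_mult ig_mult.IH by blast
  qed
  then show ?case
    using ig_mult polyS_mult by blast
qed (use G in auto)

lemma monomial_idealD:
  assumes "monomial_ideal n J" "g \<in> J"
  shows "g \<in> polyS n" "\<forall>v\<in>Poly_Mapping.keys g. monom v \<in> J"
  using assms unfolding monomial_ideal_def is_ideal_def by blast+

lemma monomial_ideal_monom_mult:
  assumes "monomial_ideal n J" "monom v \<in> J" "is_mon n s"
  shows "monom (s + v) \<in> J"
proof -
  have "monom s * monom v \<in> J"
    using assms unfolding monomial_ideal_def is_ideal_def by simp
  then show ?thesis
    by (simp add: monom_mult)
qed

lemma monomial_ideal_mdvd:
  assumes J: "monomial_ideal n J" and w: "monom w \<in> J" and wv: "mdvd w v" and v: "is_mon n v"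
  shows "monom v \<in> J"
proof -
  obtain r where r: "v = w + r"
    using wv unfolding mdvd_def by blast
  then have "monom (r + w) \<in> J"
    using monomial_ideal_monom_mult[OF J w] v by simp
  then show ?thesis
    unfolding r by (simp add: add.commute)
qed

lemma monom_in_ideal_gen_iff:
  assumes J: "monomial_ideal n J" and W: "\<forall>w\<in>W. is_mon n w" and v: "is_mon n v"
  shows "monom v \<in> ideal_gen n (J \<union> monom ` W) \<longleftrightarrow> monom v \<in> J \<or> (\<exists>w\<in>W. mdvd w v)"
proof
  assume v_in: "monom v \<in> ideal_gen n (J \<union> monom ` W)"
  have gens: "\<forall>g\<in>J \<union> monom ` W. g \<in> polyS n \<and>
      (\<forall>v\<in>Poly_Mapping.keys g. monom v \<in> J \<or> (\<exists>w\<in>W. mdvd w v))"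
    using W monomial_idealD[OF J] mdvd_refl by fastforce
  have mult: "\<forall>v s. monom v \<in> J \<or> (\<exists>w\<in>W. mdvd w v) \<longrightarrow> is_mon n s \<longrightarrow>
      monom (s + v) \<in> J \<or> (\<exists>w\<in>W. mdvd w (s + v))"
  proof (intro allI impI)
    fix v s
    assume v: "monom v \<in> J \<or> (\<exists>w\<in>W. mdvd w v)" and s: "is_mon n s"
    show "monom (s + v) \<in> J \<or> (\<exists>w\<in>W. mdvd w (s + v))"
    proof (cases "monom v \<in> J")
      case True
      then show ?thesis
        using monomial_ideal_monom_mult[OF J _ s] by simp
    next
      case False
      with v obtain w where "w \<in> W" "mdvd w v"
        by blast
      then show ?thesis
        using mdvd_add_leftI[of w v s] by blast
    qed
  qed
  show "monom v \<in> J \<or> (\<exists>w\<in>W. mdvd w v)"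
    using ideal_gen_keys_closed[OF gens mult v_in] by simp
next
  assume "monom v \<in> J \<or> (\<exists>w\<in>W. mdvd w v)"
  then show "monom v \<in> ideal_gen n (J \<union> monom ` W)"
  proof
    assume "\<exists>w\<in>W. mdvd w v"
    then obtain w s where w: "w \<in> W" "v = w + s"
      unfolding mdvd_def by blast
    then have "monom s * monom w \<in> ideal_gen n (J \<union> monom ` W)"
      using v by (intro ideal_gen.ig_mult ideal_gen.ig_gen) auto
    with w show ?thesis
      by (simp add: monom_mult add.commute)
  qed (auto intro: ideal_gen.ig_gen)
qed

lemma monom_in_ideal_gen_mdvd:
  assumes W: "\<forall>w\<in>W. is_mon n w" and v: "monom v \<in> ideal_gen n (monom ` W)"
  shows "\<exists>w\<in>W. mdvd w v"
proof -
  have gens: "\<forall>g\<in>monom ` W. g \<in> polyS n \<and> (\<forall>v\<in>Poly_Mapping.keys g. \<exists>w\<in>W. mdvd w v)"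
    using W mdvd_refl by fastforce
  have mult: "\<forall>v s. (\<exists>w\<in>W. mdvd w v) \<longrightarrow> is_mon n s \<longrightarrow> (\<exists>w\<in>W. mdvd w (s + v))"
  proof (intro allI impI)
    fix v s
    assume "\<exists>w\<in>W. mdvd w v"
    then obtain w where "w \<in> W" "mdvd w v"
      by blast
    then show "\<exists>w\<in>W. mdvd w (s + v)"
      using mdvd_add_leftI[of w v s] by blast
  qed
  show ?thesis
    using ideal_gen_keys_closed[OF gens mult v] by simp
qed

lemma monomial_ideal_ideal_gen:
  assumes J: "monomial_ideal n J" and W: "\<forall>w\<in>W. is_mon n w"
  shows "monomial_ideal n (ideal_gen n (J \<union> monom ` W))"
proof -
  let ?L = "ideal_gen n (J \<union> monom ` W)"
  have closed: "p \<in> polyS n \<and> (\<forall>v\<in>Poly_Mapping.keys p. is_mon n v \<and> monom v \<in> ?L)" if "p \<in> ?L" for p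
  proof (rule ideal_gen_keys_closed[OF _ _ that])
    show "\<forall>g\<in>J \<union> monom ` W. g \<in> polyS n \<and> (\<forall>v\<in>Poly_Mapping.keys g. is_mon n v \<and> monom v \<in> ?L)"
      using W monomial_idealD[OF J] by (auto simp: polyS_def intro: ideal_gen.ig_gen)
    show "\<forall>v s. is_mon n v \<and> monom v \<in> ?L \<longrightarrow> is_mon n s \<longrightarrow> is_mon n (s + v) \<and> monom (s + v) \<in> ?L"
      by (auto simp flip: monom_mult intro: ideal_gen.ig_mult)
  qed
  then show ?thesis
    unfolding monomial_ideal_def is_ideal_def by (blast intro: ideal_gen.intros)
qed

lemma borel_fixedD:
  assumes "borel_fixed n I" "is_mon n v" "1 \<le> i" "i < j" "j \<le> n" "monom (v + var j) \<in> I"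
  shows "monom (v + var i) \<in> I"
  using assms unfolding borel_fixed_def by blast

lemma borel_fixed_var_exchange:
  assumes J: "borel_fixed n J" and ij: "1 \<le> i" "i < j" "j \<le> n"
    and e': "is_mon n e'" and ee': "e + var j = e' + var i" and J_e': "monom e' \<in> J"
  shows "monom e \<in> J"
proof -
  have "Poly_Mapping.lookup (e + var j) j = Poly_Mapping.lookup (e' + var i) j"
    using ee' by (rule arg_cong)
  then have "Poly_Mapping.lookup e' j \<noteq> 0"
    using ij by (simp add: lookup_add lookup_var)
  then obtain e0 where e0: "e' = e0 + var j"
    using exists_var_summand by blast
  have "(e0 + var i) + var j = e + var j"
    using ee' unfolding e0 by (simp add: ac_simps)
  then have "e = e0 + var i"
    by simp
  moreover have "is_mon n e0"
    using e' unfolding e0 by simp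
  ultimately show ?thesis
    using borel_fixedD[OF J _ ij] J_e' unfolding e0 by blast
qed

section \<open>Multidegree components of Koszul cycles\<close>

definition koszul_sign :: "nat \<Rightarrow> nat set \<Rightarrow> 'b::comm_ring_1" where
  "koszul_sign i s = (-1) ^ card {j\<in>s. j < i}"

definition coeff_boundary :: "nat set \<Rightarrow> (nat set \<Rightarrow> 'b::comm_ring_1) \<Rightarrow> nat set \<Rightarrow> 'b" where
  "coeff_boundary M c s = (\<Sum>i\<in>M - s. koszul_sign i s * c (insert i s))"

text \<open>The component of multidegree \<open>d\<close> of an element of \<open>K\<^sub>t(I,S/J)\<close> is determined by the
  coefficients \<open>c w\<close> of its terms \<open>e\<^sub>w \<otimes> x\<^bsup>d - f\<^sub>w\<^esup>\<close>; this is the condition for such a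
  component to be a cycle.\<close>

definition coeff_cycle ::
    "nat \<Rightarrow> (nat \<Rightarrow> mon) \<Rightarrow> 'b::comm_ring_1 mpoly set \<Rightarrow> nat \<Rightarrow> mon \<Rightarrow> (nat set \<Rightarrow> 'b) \<Rightarrow> bool" where
  "coeff_cycle m f J t d c \<longleftrightarrow>
     (\<forall>w. c w \<noteq> 0 \<longrightarrow> w \<subseteq> {1..m} \<and> card w = t \<and> mdvd (fprod f w) d \<and> monom (d - fprod f w) \<notin> J) \<and>
     (\<forall>s\<subseteq>{1..m}. mdvd (fprod f s) d \<longrightarrow> monom (d - fprod f s) \<notin> J \<longrightarrow> coeff_boundary {1..m} c s = 0)"

definition coeff_leading :: "(nat \<Rightarrow> mon) \<Rightarrow> (nat set \<Rightarrow> 'b::zero) \<Rightarrow> nat set \<Rightarrow> bool" where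
  "coeff_leading f c u \<longleftrightarrow> c u \<noteq> 0 \<and> (\<forall>w. e_gt f w u \<longrightarrow> c w = 0)"

definition coeffs_at :: "(nat \<Rightarrow> mon) \<Rightarrow> 'b::comm_ring_1 kelem \<Rightarrow> mon \<Rightarrow> nat set \<Rightarrow> 'b" where
  "coeffs_at f g d w = (if mdvd (fprod f w) d then Poly_Mapping.lookup (g w) (d - fprod f w) else 0)"

lemma coeff_cycle_support:
  assumes "coeff_cycle m f J t d c" "c w \<noteq> 0"
  shows "w \<subseteq> {1..m}" "card w = t" "mdvd (fprod f w) d" "monom (d - fprod f w) \<notin> J"
  using assms unfolding coeff_cycle_def by blast+

lemma coeff_cycle_boundary:
  assumes "coeff_cycle m f J t d c" "s \<subseteq> {1..m}" "mdvd (fprod f s) d" "monom (d - fprod f s) \<notin> J"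
  shows "coeff_boundary {1..m} c s = 0"
  using assms unfolding coeff_cycle_def by blast

lemma lookup_kdiff:
  assumes s: "finite s" "mdvd (fprod f s) d"
  shows "Poly_Mapping.lookup (kdiff m f J g s) (d - fprod f s) =
    (if monom (d - fprod f s) \<in> J then 0 else coeff_boundary {1..m} (coeffs_at f g d) s)"
proof -
  have "Poly_Mapping.lookup (monom (f i) * g (insert i s)) (d - fprod f s) = coeffs_at f g d (insert i s)"
    if "i \<notin> s" for i
  proof -
    obtain r where r: "d = fprod f s + r"
      using s(2) unfolding mdvd_def by blast
    have "fprod f (insert i s) = f i + fprod f s"
      using s(1) that by (rule fprod_insert)
    then show ?thesis
      unfolding coeffs_at_def lookup_monom_mult r by (simp add: add.commute diff_diff_add)
  qed
  then show ?thesis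
    unfolding kdiff_def lookup_nf coeff_boundary_def koszul_sign_def
    by (simp add: lookup_sum mult.assoc lookup_neg_one_power_mult)
qed

lemma coeff_cycle_coeffs_at:
  assumes g: "g \<in> cycles n m f J t"
  shows "coeff_cycle m f J t d (coeffs_at f g d)"
  unfolding coeff_cycle_def
proof (intro conjI allI impI)
  have K: "g \<in> koszul n m J t"
    using g unfolding cycles_def by blast
  fix w
  assume "coeffs_at f g d w \<noteq> 0"
  then have "mdvd (fprod f w) d" "(w, d - fprod f w) \<in> kterms g"
    unfolding coeffs_at_def kterms_def by (auto split: if_splits)
  with kterms_koszul[OF K] show "w \<subseteq> {1..m}" "card w = t" "mdvd (fprod f w) d" "monom (d - fprod f w) \<notin> J"
    by blast+
next
  fix s
  assume s: "s \<subseteq> {1..m}" "mdvd (fprod f s) d" "monom (d - fprod f s) \<notin> J"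
  have "kdiff m f J g s = 0"
    using g unfolding cycles_def by (auto dest: fun_cong[of _ _ s])
  then show "coeff_boundary {1..m} (coeffs_at f g d) s = 0"
    using lookup_kdiff[of s f d m J g] s finite_subset by fastforce
qed

lemma coeff_leading_init_term:
  assumes K: "g \<in> koszul n m J t" and g: "g \<noteq> (\<lambda>_. 0)" and it: "init_term f g = (u, v)"
  shows "coeff_leading f (coeffs_at f g (fprod f u + v)) u"
  unfolding coeff_leading_def
proof (intro conjI allI impI)
  note greatest = init_term_greatest[OF K g, of f, unfolded it]
  show "coeffs_at f g (fprod f u + v) u \<noteq> 0"
    using greatest(1) unfolding coeffs_at_def kterms_def by simp
  fix w
  assume e: "e_gt f w u"
  show "coeffs_at f g (fprod f u + v) w = 0"
  proof (rule ccontr)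
    let ?x = "fprod f u + v - fprod f w"
    assume "coeffs_at f g (fprod f u + v) w \<noteq> 0"
    then have "(w, ?x) \<in> kterms g"
      unfolding coeffs_at_def kterms_def by (simp split: if_splits)
    moreover have "w \<noteq> u"
      using e e_gt_irrefl by blast
    ultimately have "e_gt f u w"
      using greatest(2) unfolding term_gt_def by fastforce
    with e show False
      using e_gt_asym by blast
  qed
qed

lemma monom_mult_single_insert:
  assumes "finite s" "i \<notin> s" "mdvd (fprod f (insert i s)) d"
  shows "monom (f i) * Poly_Mapping.single (d - fprod f (insert i s)) a = Poly_Mapping.single (d - fprod f s) a"
  unfolding monom_def fprod_insert_diff[OF assms] by (simp add: mult_single)

definition coeff_elem :: "(nat \<Rightarrow> mon) \<Rightarrow> mon \<Rightarrow> (nat set \<Rightarrow> 'b::comm_ring_1) \<Rightarrow> 'b kelem" where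
  "coeff_elem f d c = (\<lambda>w. Poly_Mapping.single (d - fprod f w) (c w))"

lemma coeff_elem_koszul:
  assumes cc: "coeff_cycle m f J t d c" and d: "is_mon n d"
  shows "coeff_elem f d c \<in> koszul n m J t"
  unfolding koszul_def
proof (intro CollectI conjI allI impI)
  note supp = coeff_cycle_support[OF cc]
  fix w
  show "coeff_elem f d c w = 0" if "\<not> (w \<subseteq> {1..m} \<and> card w = t)"
  proof -
    have "c w = 0"
      using that supp(1,2) by blast
    then show ?thesis
      unfolding coeff_elem_def by simp
  qed
  show "coeff_elem f d c w \<in> polyS n"
    unfolding coeff_elem_def polyS_def using is_mon_diff[OF d] by simp
  show "nf J (coeff_elem f d c w) = coeff_elem f d c w"
    using supp(4)[of w] by (cases "c w = 0") (simp_all add: coeff_elem_def nf_single)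
qed

lemma kdiff_coeff_elem:
  assumes cc: "coeff_cycle m f J t d c"
  shows "kdiff m f J (coeff_elem f d c) s = 0"
proof -
  note supp = coeff_cycle_support[OF cc]
  have summand: "(-1) ^ card {j\<in>s. j < i} * monom (f i) * coeff_elem f d c (insert i s) =
      Poly_Mapping.single (d - fprod f s) (koszul_sign i s * c (insert i s))" if "i \<notin> s" for i
  proof (cases "c (insert i s) = 0")
    case False
    then have "finite s"
      using supp(1) finite_subset by fastforce
    then have "monom (f i) * coeff_elem f d c (insert i s) = Poly_Mapping.single (d - fprod f s) (c (insert i s))"
      unfolding coeff_elem_def using that supp(3)[OF False] by (rule monom_mult_single_insert)
    then show ?thesis
      unfolding mult.assoc by (simp add: neg_one_power_mpoly mult_single koszul_sign_def)
  qed (simp add: coeff_elem_def)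
  have sum: "kdiff m f J (coeff_elem f d c) s =
      nf J (Poly_Mapping.single (d - fprod f s) (coeff_boundary {1..m} c s))"
    unfolding kdiff_def coeff_boundary_def sum_single[symmetric] by (simp add: summand)
  show ?thesis
  proof (cases "\<exists>i\<in>{1..m} - s. c (insert i s) \<noteq> 0")
    case True
    then obtain i where i: "i \<notin> s" "c (insert i s) \<noteq> 0"
      by blast
    then have "s \<subseteq> {1..m}" "finite s"
      using supp(1) finite_subset by fastforce+
    moreover have "mdvd (fprod f s) (fprod f (insert i s))"
      using fprod_insert[OF \<open>finite s\<close> i(1)] by simp
    then have "mdvd (fprod f s) d"
      using supp(3)[OF i(2)] by (rule mdvd_trans)
    ultimately show ?thesis
      unfolding sum nf_single using coeff_cycle_boundary[OF cc] by auto
  qed (simp add: sum coeff_boundary_def)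
qed

lemma init_term_coeff_elem:
  assumes cc: "coeff_cycle m f J t d c" and lead: "coeff_leading f c u"
  shows "init_term f (coeff_elem f d c) = (u, d - fprod f u)"
proof (rule init_term_eqI)
  note supp = coeff_cycle_support[OF cc]
  show "(u, d - fprod f u) \<in> kterms (coeff_elem f d c)"
    using lead unfolding kterms_def coeff_elem_def coeff_leading_def by simp
  show "\<forall>b\<in>kterms (coeff_elem f d c). b \<noteq> (u, d - fprod f u) \<longrightarrow> term_gt f (u, d - fprod f u) b"
  proof (intro ballI impI)
    fix b
    assume b: "b \<in> kterms (coeff_elem f d c)" "b \<noteq> (u, d - fprod f u)"
    obtain w x where wx: "b = (w, x)"
      by fastforce
    with b have cw: "c w \<noteq> 0" and x: "x = d - fprod f w"
      unfolding kterms_def coeff_elem_def by (auto simp: lookup_single when_def split: if_splits)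
    have "w \<noteq> u"
      using b(2) unfolding wx x by simp
    moreover have "finite w" "finite u"
      using supp(1)[OF cw] supp(1)[of u] lead finite_subset unfolding coeff_leading_def by auto
    ultimately have "e_gt f u w"
      using e_gt_total lead cw unfolding coeff_leading_def by blast
    then show "term_gt f (u, d - fprod f u) b"
      unfolding term_gt_def wx by simp
  qed
qed

lemma cycle_of_coeff_cycle:
  assumes cc: "coeff_cycle m f J t d c" and lead: "coeff_leading f c u" and d: "is_mon n d"
  shows "\<exists>g\<in>cycles n m f J t. g \<noteq> (\<lambda>_. 0) \<and> init_term f g = (u, d - fprod f u)"
proof (intro bexI conjI)
  show "coeff_elem f d c \<in> cycles n m f J t"
    unfolding cycles_def using coeff_elem_koszul[OF cc d] kdiff_coeff_elem[OF cc] by auto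
  show "coeff_elem f d c \<noteq> (\<lambda>_. 0)"
  proof
    assume "coeff_elem f d c = (\<lambda>_. 0)"
    then have "Poly_Mapping.lookup (coeff_elem f d c u) (d - fprod f u) = 0"
      by simp
    with lead show False
      unfolding coeff_elem_def coeff_leading_def by simp
  qed
  show "init_term f (coeff_elem f d c) = (u, d - fprod f u)"
    using cc lead by (rule init_term_coeff_elem)
qed

section \<open>Exchange operators on coefficient vectors\<close>

definition sign_if :: "bool \<Rightarrow> 'b::comm_ring_1" where
  "sign_if P = (if P then -1 else 1)"

definition exchange_sign :: "nat \<Rightarrow> nat \<Rightarrow> nat set \<Rightarrow> 'b::comm_ring_1" where
  "exchange_sign k l w = koszul_sign k (w - {l}) * koszul_sign l (w - {l})"

lemma koszul_sign_insert:
  assumes "finite r" "y \<notin> r"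
  shows "koszul_sign x (insert y r) = sign_if (y < x) * (koszul_sign x r :: 'b::comm_ring_1)"
proof (cases "y < x")
  case True
  then have "{j\<in>insert y r. j < x} = insert y {j\<in>r. j < x}"
    by auto
  with True assms show ?thesis
    by (simp add: koszul_sign_def sign_if_def)
next
  case False
  then have "{j\<in>insert y r. j < x} = {j\<in>r. j < x}"
    by auto
  with False show ?thesis
    by (simp add: koszul_sign_def sign_if_def)
qed

lemma koszul_sign_square: "koszul_sign x s * koszul_sign x s = (1::'b::comm_ring_1)"
  unfolding koszul_sign_def by (simp flip: power_mult_distrib)

lemma exchange_sign_self:
  assumes "i \<notin> s"
  shows "koszul_sign i s * exchange_sign k i (insert i s) = (koszul_sign k s :: 'b::comm_ring_1)"
proof -
  have "insert i s - {i} = s"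
    using assms by auto
  then show ?thesis
    unfolding exchange_sign_def by (metis koszul_sign_square mult.commute mult.left_commute mult_1)
qed

lemma exchange_sign_swap_back:
  assumes "finite s" "l \<in> s" "k \<notin> s"
  shows "exchange_sign k l s * koszul_sign l (insert k (s - {l})) = - (koszul_sign k s :: 'b::comm_ring_1)"
proof -
  let ?r = "s - {l}"
  have "s = insert l ?r"
    using assms(2) by auto
  then have "koszul_sign k s = sign_if (l < k) * (koszul_sign k ?r :: 'b)"
    using assms by (metis koszul_sign_insert finite_Diff Diff_iff singletonI)
  moreover have "koszul_sign l (insert k ?r) = sign_if (k < l) * (koszul_sign l ?r :: 'b)"
    using assms by (intro koszul_sign_insert) auto
  moreover have "sign_if (k < l) = - (sign_if (l < k) :: 'b)"
    using assms(2,3) unfolding sign_if_def by (cases "k < l") auto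
  ultimately show ?thesis
    unfolding exchange_sign_def
    by (simp add: algebra_simps koszul_sign_square)
qed

lemma exchange_sign_insert:
  assumes "finite s" "l \<in> s" "i \<notin> s" "k \<notin> s" "i \<noteq> k"
  shows "koszul_sign i s * exchange_sign k l (insert i s) =
    exchange_sign k l s * (koszul_sign i (insert k (s - {l})) :: 'b::comm_ring_1)"
proof -
  let ?r = "s - {l}"
  have fr: "finite ?r" and il: "i \<noteq> l"
    using assms by auto
  have ins: "insert i s - {l} = insert i ?r"
    using il by auto
  have si: "koszul_sign i s = sign_if (l < i) * (koszul_sign i ?r :: 'b)"
    using assms(2) fr by (metis koszul_sign_insert insert_Diff Diff_iff singletonI)
  have sk: "koszul_sign k (insert i ?r) = sign_if (i < k) * (koszul_sign k ?r :: 'b)"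
    and sl: "koszul_sign l (insert i ?r) = sign_if (i < l) * (koszul_sign l ?r :: 'b)"
    and si': "koszul_sign i (insert k ?r) = sign_if (k < i) * (koszul_sign i ?r :: 'b)"
    using fr assms(3,4) by (auto intro: koszul_sign_insert)
  have "l < i \<longleftrightarrow> \<not> i < l" "k < i \<longleftrightarrow> \<not> i < k"
    using il assms(5) by auto
  then have signs: "sign_if (l < i) * sign_if (i < k) * sign_if (i < l) = (sign_if (k < i) :: 'b)"
    unfolding sign_if_def by (cases "i < l"; cases "i < k") simp_all
  have "koszul_sign i s * exchange_sign k l (insert i s) =
      (sign_if (l < i) * sign_if (i < k) * sign_if (i < l)) *
      (koszul_sign i ?r * koszul_sign k ?r * (koszul_sign l ?r :: 'b))"
    unfolding exchange_sign_def ins si sk sl by (simp only: ac_simps)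
  also have "\<dots> = exchange_sign k l s * koszul_sign i (insert k ?r)"
    unfolding signs exchange_sign_def si' by (simp only: ac_simps)
  finally show ?thesis .
qed

definition coeff_exchange ::
    "nat set \<Rightarrow> (nat \<Rightarrow> nat \<Rightarrow> bool) \<Rightarrow> (nat \<Rightarrow> 'b::comm_ring_1) \<Rightarrow> (nat set \<Rightarrow> 'b) \<Rightarrow> nat set \<Rightarrow> 'b" where
  "coeff_exchange M R \<beta> c w =
     (\<Sum>l\<in>w. \<Sum>k\<in>{k\<in>M - w. R k l}. exchange_sign k l w * \<beta> k * c (insert k (w - {l})))"

definition exchange_cross_sum ::
    "nat set \<Rightarrow> (nat \<Rightarrow> nat \<Rightarrow> bool) \<Rightarrow> (nat \<Rightarrow> 'b::comm_ring_1) \<Rightarrow> (nat set \<Rightarrow> 'b) \<Rightarrow> nat set \<Rightarrow> 'b" where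
  "exchange_cross_sum M R \<beta> c s =
     (\<Sum>l\<in>s. \<Sum>k\<in>{k\<in>M - s. R k l}. \<Sum>i\<in>M - s - {k}.
        exchange_sign k l s * \<beta> k * (koszul_sign i (insert k (s - {l})) * c (insert i (insert k (s - {l})))))"

definition polarization_op :: "nat set \<Rightarrow> (nat \<Rightarrow> nat \<Rightarrow> bool) \<Rightarrow> (nat set \<Rightarrow> 'b::comm_ring_1) \<Rightarrow>
    (nat \<Rightarrow> 'b) \<Rightarrow> (nat set \<Rightarrow> 'b) \<Rightarrow> nat set \<Rightarrow> 'b" where
  "polarization_op M R \<alpha> \<beta> c w = \<alpha> w * c w + coeff_exchange M R \<beta> c w"

lemma sum_if_eq_card: "finite A \<Longrightarrow> (\<Sum>x\<in>A. if P x then z else 0) = of_nat (card {x\<in>A. P x}) * z"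
  by (simp add: sum.inter_filter[symmetric])

lemma koszul_sign_coeff_exchange_insert:
  fixes \<beta> :: "nat \<Rightarrow> 'b::comm_ring_1"
  assumes M: "finite M" and fs: "finite s" and i: "i \<in> M - s"
  shows "koszul_sign i s * coeff_exchange M R \<beta> c (insert i s) =
    (\<Sum>k\<in>M - s. if k \<noteq> i \<and> R k i then koszul_sign k s * \<beta> k * c (insert k s) else 0) +
    (\<Sum>l\<in>s. \<Sum>k\<in>M - s. if k \<noteq> i \<and> R k l then exchange_sign k l s * \<beta> k *
       (koszul_sign i (insert k (s - {l})) * c (insert i (insert k (s - {l})))) else 0)"
proof -
  have fA: "finite (M - s)"
    using M by simp
  have iS: "i \<notin> s"
    using i by simp
  have filt: "{k\<in>M - insert i s. R k l} = {k\<in>M - s. k \<noteq> i \<and> R k l}" for l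
    by auto
  have "coeff_exchange M R \<beta> c (insert i s) =
      (\<Sum>k\<in>M - s. if k \<noteq> i \<and> R k i then exchange_sign k i (insert i s) * \<beta> k * c (insert k s) else 0) +
      (\<Sum>l\<in>s. \<Sum>k\<in>M - s. if k \<noteq> i \<and> R k l
         then exchange_sign k l (insert i s) * \<beta> k * c (insert k (insert i s - {l})) else 0)"
    unfolding coeff_exchange_def filt sum.insert[OF fs iS] sum.inter_filter[OF fA] Diff_insert_absorb[OF iS]
    by simp
  moreover have "koszul_sign i s * (exchange_sign k i (insert i s) * \<beta> k * c (insert k s)) =
      koszul_sign k s * \<beta> k * c (insert k s)" for k
    unfolding exchange_sign_self[OF iS, of k, symmetric] by (simp only: mult.assoc)
  moreover have "koszul_sign i s * (exchange_sign k l (insert i s) * \<beta> k * c (insert k (insert i s - {l}))) =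
      exchange_sign k l s * \<beta> k * (koszul_sign i (insert k (s - {l})) * c (insert i (insert k (s - {l}))))"
    if "l \<in> s" "k \<in> M - s" "k \<noteq> i" for l k
  proof -
    have ins: "insert k (insert i s - {l}) = insert i (insert k (s - {l}))"
      using that iS by auto
    have "k \<notin> s"
      using that by simp
    have "koszul_sign i s * (exchange_sign k l (insert i s) * \<beta> k * c (insert k (insert i s - {l}))) =
        (koszul_sign i s * exchange_sign k l (insert i s)) * \<beta> k * c (insert i (insert k (s - {l})))"
      unfolding ins by (simp only: mult.assoc)
    also have "\<dots> = exchange_sign k l s * \<beta> k * (koszul_sign i (insert k (s - {l})) * c (insert i (insert k (s - {l}))))"
      unfolding exchange_sign_insert[OF fs \<open>l \<in> s\<close> iS \<open>k \<notin> s\<close> that(3)[symmetric]]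
      by (simp only: ac_simps)
    finally show ?thesis .
  qed
  ultimately show ?thesis
    by (simp add: distrib_left sum_distrib_left if_distrib cong: if_cong)
qed

lemma coeff_boundary_exchange:
  fixes \<beta> :: "nat \<Rightarrow> 'b::comm_ring_1"
  assumes M: "finite M" and s: "s \<subseteq> M"
  shows "coeff_boundary M (coeff_exchange M R \<beta> c) s =
    (\<Sum>k\<in>M - s. of_nat (card {i\<in>M - s. i \<noteq> k \<and> R k i}) * (koszul_sign k s * \<beta> k * c (insert k s))) +
    exchange_cross_sum M R \<beta> c s"
proof -
  define A where "A = M - s"
  have fs: "finite s" and fA: "finite A"
    using M s finite_subset unfolding A_def by auto
  define Z where "Z k = koszul_sign k s * \<beta> k * c (insert k s)" for k
  define X where "X i l k = exchange_sign k l s * \<beta> k *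
    (koszul_sign i (insert k (s - {l})) * c (insert i (insert k (s - {l}))))" for i l k
  have per_i: "koszul_sign i s * coeff_exchange M R \<beta> c (insert i s) =
      (\<Sum>k\<in>A. if k \<noteq> i \<and> R k i then Z k else 0) + (\<Sum>l\<in>s. \<Sum>k\<in>A. if k \<noteq> i \<and> R k l then X i l k else 0)"
    if "i \<in> A" for i
    using koszul_sign_coeff_exchange_insert[OF M fs that[unfolded A_def]] unfolding Z_def X_def A_def .
  have "coeff_boundary M (coeff_exchange M R \<beta> c) s =
      (\<Sum>i\<in>A. \<Sum>k\<in>A. if k \<noteq> i \<and> R k i then Z k else 0) +
      (\<Sum>i\<in>A. \<Sum>l\<in>s. \<Sum>k\<in>A. if k \<noteq> i \<and> R k l then X i l k else 0)"
    unfolding coeff_boundary_def A_def[symmetric] by (simp add: per_i sum.distrib)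
  moreover have "(\<Sum>i\<in>A. \<Sum>k\<in>A. if k \<noteq> i \<and> R k i then Z k else 0) =
      (\<Sum>k\<in>A. of_nat (card {i\<in>A. i \<noteq> k \<and> R k i}) * Z k)"
  proof -
    have "(\<Sum>i\<in>A. \<Sum>k\<in>A. if k \<noteq> i \<and> R k i then Z k else 0) =
        (\<Sum>k\<in>A. \<Sum>i\<in>A. if i \<noteq> k \<and> R k i then Z k else 0)"
      by (subst sum.swap) (simp add: conj_commute eq_commute)
    also have "\<dots> = (\<Sum>k\<in>A. of_nat (card {i\<in>A. i \<noteq> k \<and> R k i}) * Z k)"
      by (rule sum.cong[OF refl], rule sum_if_eq_card[OF fA])
    finally show ?thesis .
  qed
  moreover have "(\<Sum>i\<in>A. \<Sum>l\<in>s. \<Sum>k\<in>A. if k \<noteq> i \<and> R k l then X i l k else 0) =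
      exchange_cross_sum M R \<beta> c s"
  proof -
    have "(\<Sum>i\<in>A. \<Sum>l\<in>s. \<Sum>k\<in>A. if k \<noteq> i \<and> R k l then X i l k else 0) =
        (\<Sum>l\<in>s. \<Sum>i\<in>A. \<Sum>k\<in>A. if k \<noteq> i \<and> R k l then X i l k else 0)"
      by (rule sum.swap)
    also have "\<dots> = (\<Sum>l\<in>s. \<Sum>k\<in>A. \<Sum>i\<in>A. if k \<noteq> i \<and> R k l then X i l k else 0)"
      by (rule sum.cong[OF refl], rule sum.swap)
    also have "\<dots> = (\<Sum>l\<in>s. \<Sum>k\<in>A. if R k l then (\<Sum>i\<in>A - {k}. X i l k) else 0)"
      by (intro sum.cong refl) (auto simp: sum.inter_filter[OF fA, symmetric] intro!: sum.cong)
    also have "\<dots> = exchange_cross_sum M R \<beta> c s"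
      unfolding exchange_cross_sum_def X_def A_def sum.inter_filter[OF fA[unfolded A_def]] ..
    finally show ?thesis .
  qed
  ultimately show ?thesis
    unfolding Z_def A_def by simp
qed

lemma exchange_sign_coeff_boundary:
  fixes \<beta> :: "nat \<Rightarrow> 'b::comm_ring_1"
  assumes M: "finite M" and s: "s \<subseteq> M" and l: "l \<in> s" and k: "k \<in> M - s"
  shows "exchange_sign k l s * \<beta> k * coeff_boundary M c (insert k (s - {l})) =
    (\<Sum>i\<in>M - s - {k}. exchange_sign k l s * \<beta> k *
      (koszul_sign i (insert k (s - {l})) * c (insert i (insert k (s - {l}))))) -
    koszul_sign k s * \<beta> k * c (insert k s)"
proof -
  define A where "A = M - s"
  have fs: "finite s" and fA: "finite (A - {k})"
    using M s finite_subset unfolding A_def by auto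
  have kS: "k \<notin> s"
    using k by simp
  have Meq: "M - insert k (s - {l}) = insert l (A - {k})"
    using l k s unfolding A_def by auto
  have lA: "l \<notin> A - {k}"
    using l unfolding A_def by simp
  have "insert l (insert k (s - {l})) = insert k s"
    using l by auto
  then have "coeff_boundary M c (insert k (s - {l})) =
      koszul_sign l (insert k (s - {l})) * c (insert k s) +
      (\<Sum>i\<in>A - {k}. koszul_sign i (insert k (s - {l})) * c (insert i (insert k (s - {l}))))"
    unfolding coeff_boundary_def Meq sum.insert[OF fA lA] by simp
  moreover have "exchange_sign k l s * \<beta> k * (koszul_sign l (insert k (s - {l})) * c (insert k s)) =
      - (koszul_sign k s * \<beta> k * c (insert k s))"
  proof -
    have "exchange_sign k l s * \<beta> k * (koszul_sign l (insert k (s - {l})) * c (insert k s)) =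
        (exchange_sign k l s * koszul_sign l (insert k (s - {l}))) * \<beta> k * c (insert k s)"
      by (simp only: ac_simps)
    then show ?thesis
      unfolding exchange_sign_swap_back[OF fs l kS] by simp
  qed
  ultimately show ?thesis
    unfolding A_def by (simp add: distrib_left sum_distrib_left)
qed

lemma coeff_exchange_boundary:
  fixes \<beta> :: "nat \<Rightarrow> 'b::comm_ring_1"
  assumes M: "finite M" and s: "s \<subseteq> M"
  shows "coeff_exchange M R \<beta> (coeff_boundary M c) s =
    exchange_cross_sum M R \<beta> c s -
    (\<Sum>k\<in>M - s. of_nat (card {l\<in>s. R k l}) * (koszul_sign k s * \<beta> k * c (insert k s)))"
proof -
  define A where "A = M - s"
  have fs: "finite s" and fA: "finite A"
    using M s finite_subset unfolding A_def by auto
  define Z where "Z k = koszul_sign k s * \<beta> k * c (insert k s)" for k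
  define Y where "Y l k = (\<Sum>i\<in>A - {k}. exchange_sign k l s * \<beta> k *
    (koszul_sign i (insert k (s - {l})) * c (insert i (insert k (s - {l})))))" for l k
  have per_lk: "exchange_sign k l s * \<beta> k * coeff_boundary M c (insert k (s - {l})) = Y l k - Z k"
    if "l \<in> s" "k \<in> A" for l k
    using exchange_sign_coeff_boundary[OF M s that[unfolded A_def]] unfolding Y_def Z_def A_def .
  have "coeff_exchange M R \<beta> (coeff_boundary M c) s = (\<Sum>l\<in>s. \<Sum>k\<in>{k\<in>A. R k l}. Y l k - Z k)"
    unfolding coeff_exchange_def A_def[symmetric] by (intro sum.cong refl) (simp add: per_lk)
  also have "\<dots> = exchange_cross_sum M R \<beta> c s - (\<Sum>l\<in>s. \<Sum>k\<in>{k\<in>A. R k l}. Z k)"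
    unfolding exchange_cross_sum_def Y_def A_def by (simp add: sum_subtractf)
  also have "(\<Sum>l\<in>s. \<Sum>k\<in>{k\<in>A. R k l}. Z k) = (\<Sum>k\<in>A. of_nat (card {l\<in>s. R k l}) * Z k)"
  proof -
    have "(\<Sum>l\<in>s. \<Sum>k\<in>{k\<in>A. R k l}. Z k) = (\<Sum>l\<in>s. \<Sum>k\<in>A. if R k l then Z k else 0)"
      by (simp only: sum.inter_filter[OF fA])
    also have "\<dots> = (\<Sum>k\<in>A. \<Sum>l\<in>s. if R k l then Z k else 0)"
      by (rule sum.swap)
    also have "\<dots> = (\<Sum>k\<in>A. of_nat (card {l\<in>s. R k l}) * Z k)"
      by (rule sum.cong[OF refl], rule sum_if_eq_card[OF fs])
    finally show ?thesis .
  qed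
  finally show ?thesis
    unfolding Z_def A_def .
qed

lemma coeff_boundary_scale:
  assumes "\<forall>i\<in>M - s. c (insert i s) \<noteq> 0 \<longrightarrow> \<alpha> (insert i s) = \<alpha> s - \<beta> i"
  shows "coeff_boundary M (\<lambda>w. \<alpha> w * c w) s =
    \<alpha> s * coeff_boundary M c s - (\<Sum>k\<in>M - s. koszul_sign k s * \<beta> k * (c (insert k s) :: 'b::comm_ring_1))"
proof -
  have "koszul_sign i s * (\<alpha> (insert i s) * c (insert i s)) =
      \<alpha> s * (koszul_sign i s * c (insert i s)) - koszul_sign i s * \<beta> i * c (insert i s)" if "i \<in> M - s" for i
  proof (cases "c (insert i s) = 0")
    case False
    then have \<alpha>_i: "\<alpha> (insert i s) = \<alpha> s - \<beta> i"
      using assms that by blast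
    show ?thesis
      unfolding \<alpha>_i by (simp add: algebra_simps)
  qed simp
  then show ?thesis
    unfolding coeff_boundary_def by (simp add: sum_subtractf sum_distrib_left)
qed

text \<open>The terms exchanging two generators cancel in pairs, and the diagonal part cancels the
  terms that undo an exchange, because each \<open>k\<close> with \<open>\<beta> k \<noteq> 0\<close> has exactly one partner \<open>l\<close>.\<close>

lemma coeff_boundary_polarization:
  fixes \<alpha> :: "nat set \<Rightarrow> 'b::comm_ring_1"
  assumes M: "finite M" and s: "s \<subseteq> M"
    and \<alpha>: "\<forall>i\<in>M - s. c (insert i s) \<noteq> 0 \<longrightarrow> \<alpha> (insert i s) = \<alpha> s - \<beta> i"
    and \<beta>: "\<forall>k\<in>M - s. \<beta> k \<noteq> 0 \<longrightarrow> card {l\<in>M. R k l} = 1"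
    and R: "\<forall>k. \<not> R k k"
  shows "coeff_boundary M (polarization_op M R \<alpha> \<beta> c) s = polarization_op M R \<alpha> \<beta> (coeff_boundary M c) s"
proof -
  define Z where "Z k = koszul_sign k s * \<beta> k * c (insert k s)" for k
  define N1 where "N1 k = card {i\<in>M - s. i \<noteq> k \<and> R k i}" for k
  define N2 where "N2 k = card {l\<in>s. R k l}" for k
  have fs: "finite s"
    using M s finite_subset by auto
  have "of_nat (N1 k) * Z k + of_nat (N2 k) * Z k = Z k" if k: "k \<in> M - s" for k
  proof (cases "\<beta> k = 0")
    case False
    have "{l\<in>M. R k l} = {i\<in>M - s. i \<noteq> k \<and> R k i} \<union> {l\<in>s. R k l}"
      using s R by auto
    moreover have "card ({i\<in>M - s. i \<noteq> k \<and> R k i} \<union> {l\<in>s. R k l}) = N1 k + N2 k"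
      unfolding N1_def N2_def using M fs by (intro card_Un_disjoint) auto
    ultimately have "N1 k + N2 k = card {l\<in>M. R k l}"
      by simp
    then have "N1 k + N2 k = 1"
      using \<beta> k False by simp
    then show ?thesis
      by (metis distrib_right mult_1 of_nat_1 of_nat_add)
  qed (simp add: Z_def)
  then have N12: "(\<Sum>k\<in>M - s. of_nat (N1 k) * Z k) + (\<Sum>k\<in>M - s. of_nat (N2 k) * Z k) =
      (\<Sum>k\<in>M - s. Z k)"
    by (simp add: sum.distrib[symmetric])
  have "coeff_boundary M (polarization_op M R \<alpha> \<beta> c) s =
      coeff_boundary M (\<lambda>w. \<alpha> w * c w) s + coeff_boundary M (coeff_exchange M R \<beta> c) s"
    unfolding polarization_op_def coeff_boundary_def by (simp add: distrib_left sum.distrib)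
  also have "\<dots> = (\<alpha> s * coeff_boundary M c s - (\<Sum>k\<in>M - s. Z k)) +
      ((\<Sum>k\<in>M - s. of_nat (N1 k) * Z k) + exchange_cross_sum M R \<beta> c s)"
    unfolding coeff_boundary_scale[OF \<alpha>] coeff_boundary_exchange[OF M s] Z_def N1_def ..
  also have "\<dots> = \<alpha> s * coeff_boundary M c s +
      (exchange_cross_sum M R \<beta> c s - (\<Sum>k\<in>M - s. of_nat (N2 k) * Z k))"
    unfolding N12[symmetric] by (simp add: algebra_simps)
  also have "\<dots> = polarization_op M R \<alpha> \<beta> (coeff_boundary M c) s"
    unfolding polarization_op_def coeff_exchange_boundary[OF M s] Z_def N2_def ..
  finally show ?thesis .
qed

section \<open>Polarization of cycle components\<close>

lemma coeff_cycle_restrict: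
  fixes c :: "nat set \<Rightarrow> 'b::comm_ring_1"
  assumes J: "monomial_ideal n J" and f_mon: "\<forall>i\<in>{1..m}. is_mon n (f i)"
    and supp: "\<And>w. c w \<noteq> 0 \<Longrightarrow> w \<subseteq> {1..m} \<and> card w = t \<and> mdvd (fprod f w) d"
    and bd: "\<And>s. s \<subseteq> {1..m} \<Longrightarrow> mdvd (fprod f s) d \<Longrightarrow> monom (d - fprod f s) \<notin> J \<Longrightarrow>
      coeff_boundary {1..m} c s = 0"
  shows "coeff_cycle m f J t d (\<lambda>w. if monom (d - fprod f w) \<in> J then 0 else c w)"
  unfolding coeff_cycle_def
proof (intro conjI allI impI)
  fix w
  assume "(if monom (d - fprod f w) \<in> J then 0 else c w) \<noteq> 0"
  then show "w \<subseteq> {1..m}" "card w = t" "mdvd (fprod f w) d" "monom (d - fprod f w) \<notin> J"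
    using supp by (auto split: if_splits)
next
  fix s
  assume s: "s \<subseteq> {1..m}" "mdvd (fprod f s) d" "monom (d - fprod f s) \<notin> J"
  have "(if monom (d - fprod f (insert x s)) \<in> J then 0 else c (insert x s)) = c (insert x s)"
    if x: "x \<in> {1..m} - s" for x
  proof (cases "c (insert x s) = 0")
    case False
    have "finite s"
      using s(1) finite_subset by blast
    then have "d - fprod f s = f x + (d - fprod f (insert x s))"
      using x supp[OF False] by (intro fprod_insert_diff) auto
    then have "monom (d - fprod f (insert x s)) \<notin> J"
      using s(3) x f_mon monomial_ideal_monom_mult[OF J] by (metis Diff_iff)
    then show ?thesis
      by simp
  qed simp
  then show "coeff_boundary {1..m} (\<lambda>w. if monom (d - fprod f w) \<in> J then 0 else c w) s = 0"
    using bd[OF s] unfolding coeff_boundary_def by simp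
qed

text \<open>The derivation \<open>x\<^sub>i \<partial>/\<partial>x\<^sub>j\<close> of \<open>S\<close>, extended to the Koszul complex by
  \<open>e\<^sub>k \<mapsto> \<beta>\<^sub>k e\<^sub>l\<close> where \<open>\<beta>\<^sub>k\<close> is the exponent of \<open>x\<^sub>j\<close> in \<open>f\<^sub>k\<close> and
  \<open>f\<^sub>k x\<^sub>i = f\<^sub>l x\<^sub>j\<close>, maps the component of multidegree \<open>d\<close> to that of multidegree
  \<open>d x\<^sub>i / x\<^sub>j\<close>; on coefficient vectors it acts as follows.\<close>

definition polarization :: "nat \<Rightarrow> (nat \<Rightarrow> mon) \<Rightarrow> nat \<Rightarrow> nat \<Rightarrow> mon \<Rightarrow>
    (nat set \<Rightarrow> 'b::comm_ring_1) \<Rightarrow> nat set \<Rightarrow> 'b" where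
  "polarization m f i j d = polarization_op {1..m}
     (\<lambda>k l. k \<in> {1..m} \<and> l \<in> {1..m} \<and> f k + var i = f l + var j)
     (\<lambda>w. of_nat (Poly_Mapping.lookup (d - fprod f w) j)) (\<lambda>k. of_nat (Poly_Mapping.lookup (f k) j))"

lemma polarization_nonzero:
  assumes "polarization m f i j d c w \<noteq> 0"
  shows "(c w \<noteq> 0 \<and> Poly_Mapping.lookup (d - fprod f w) j \<noteq> 0) \<or>
    (\<exists>l\<in>w. \<exists>k\<in>{1..m} - w. l \<in> {1..m} \<and> f k + var i = f l + var j \<and> c (insert k (w - {l})) \<noteq> 0)"
proof (rule ccontr)
  assume "\<not> ?thesis"
  then have "polarization m f i j d c w = 0"
    unfolding polarization_def polarization_op_def coeff_exchange_def
    by (auto intro!: sum.neutral)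
  with assms show False
    by contradiction
qed

lemma polarization_support:
  assumes cc: "coeff_cycle m f J t (d0 + var j) c" and nz: "polarization m f i j (d0 + var j) c w \<noteq> 0"
  shows "w \<subseteq> {1..m} \<and> card w = t \<and> mdvd (fprod f w) (d0 + var i)"
  using polarization_nonzero[OF nz]
proof
  assume "c w \<noteq> 0 \<and> Poly_Mapping.lookup (d0 + var j - fprod f w) j \<noteq> 0"
  then have cw: "c w \<noteq> 0" and "Poly_Mapping.lookup (d0 + var j - fprod f w) j \<noteq> 0"
    by simp_all
  then obtain e where e: "d0 + var j - fprod f w = e + var j"
    using exists_var_summand by blast
  have "d0 + var j = (fprod f w + e) + var j"
    using add_diff_mdvd[OF coeff_cycle_support(3)[OF cc cw]] unfolding e by (simp add: ac_simps)
  then have "d0 = fprod f w + e"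
    by (rule add_right_imp_eq)
  then have "mdvd (fprod f w) (d0 + var i)"
    unfolding mdvd_def by (intro exI[of _ "e + var i"]) (simp add: add.assoc)
  then show ?thesis
    using coeff_cycle_support[OF cc cw] by blast
next
  assume "\<exists>l\<in>w. \<exists>k\<in>{1..m} - w. l \<in> {1..m} \<and> f k + var i = f l + var j \<and> c (insert k (w - {l})) \<noteq> 0"
  then obtain l k where l: "l \<in> w" "l \<in> {1..m}" and k: "k \<in> {1..m}" "k \<notin> w"
    and fkl: "f k + var i = f l + var j" and cn: "c (insert k (w - {l})) \<noteq> 0"
    by blast
  note supp = coeff_cycle_support[OF cc cn]
  have "finite w"
    using supp(1) finite_subset[of "w - {l}" "{1..m}"] by auto
  have exch: "fprod f (insert k (w - {l})) + var i = fprod f w + var j"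
    using \<open>finite w\<close> l(1) k(2) fkl by (rule fprod_exchange_var)
  have "mdvd (fprod f (insert k (w - {l})) + var i) (d0 + var j + var i)"
    using supp(3) by (simp only: mdvd_add_cancel_right)
  then have "mdvd (fprod f w + var j) (d0 + var i + var j)"
    unfolding exch by (simp only: ac_simps)
  then have "mdvd (fprod f w) (d0 + var i)"
    by (simp only: mdvd_add_cancel_right)
  moreover have "w \<subseteq> {1..m}"
    using supp(1) l by auto
  moreover have "card w = t"
    using supp(2) \<open>finite w\<close> l(1) k(2) card_gt_0_iff[of w]
    by (auto simp: card_insert_if card_Diff_singleton)
  ultimately show ?thesis
    by blast
qed

lemma polarization_diagonal:
  assumes "\<And>l k. l \<in> w \<Longrightarrow> k \<notin> w \<Longrightarrow> f k + var i = f l + var j \<Longrightarrow> c (insert k (w - {l})) = 0"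
  shows "polarization m f i j d c w = of_nat (Poly_Mapping.lookup (d - fprod f w) j) * c w"
  unfolding polarization_def polarization_op_def coeff_exchange_def using assms
  by (simp add: sum.neutral)

lemma coeff_leading_exchange_zero:
  assumes cc: "coeff_cycle m f J t d c" and lead: "coeff_leading f c u"
    and w: "w = u \<or> e_gt f w u" and l: "l \<in> w" and k: "k \<notin> w"
    and fkl: "f k + var i = f l + var j" and ij: "i < j"
  shows "c (insert k (w - {l})) = 0"
proof (rule ccontr)
  let ?u' = "insert k (w - {l})"
  assume cu': "c ?u' \<noteq> 0"
  have fin_u': "finite ?u'"
    using coeff_cycle_support(1)[OF cc cu'] by (rule finite_subset) simp
  have fin_u: "finite u"
    using coeff_cycle_support(1)[OF cc] lead unfolding coeff_leading_def by (metis finite_subset finite_atLeastAtMost)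
  have "finite w"
    using fin_u' by simp
  then have "fprod f ?u' + var i = fprod f w + var j"
    using l k fkl by (rule fprod_exchange_var)
  then have w_u': "revlex_gt (fprod f w) (fprod f ?u')"
    using ij by (intro revlex_gt_var_exchange) simp_all
  have "revlex_gt (fprod f w) (fprod f u)"
  proof (cases "?u' = u")
    case False
    have "\<not> e_gt f ?u' u"
      using lead cu' unfolding coeff_leading_def by blast
    with False have "e_gt f u ?u'"
      using e_gt_total[OF fin_u' fin_u False] by blast
    then have "revlex_gt (fprod f ?u') (fprod f u) \<or> fprod f ?u' = fprod f u"
      unfolding e_gt_def by auto
    with w_u' show ?thesis
      using revlex_gt_trans by auto
  qed (use w_u' in simp)
  then have "e_gt f u w"
    unfolding e_gt_def by simp
  with w show False
    using e_gt_irrefl e_gt_asym by blast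
qed

lemma polarization_leading:
  fixes c :: "nat set \<Rightarrow> 'b::{idom, ring_char_0}"
  assumes cc: "coeff_cycle m f J t (fprod f u + v0 + var j) c" and lead: "coeff_leading f c u" and ij: "i < j"
  shows "coeff_leading f (polarization m f i j (fprod f u + v0 + var j) c) u"
proof -
  let ?d = "fprod f u + v0 + var j"
  have diag: "polarization m f i j ?d c w = of_nat (Poly_Mapping.lookup (?d - fprod f w) j) * c w"
    if "w = u \<or> e_gt f w u" for w
    using coeff_leading_exchange_zero[OF cc lead that _ _ _ ij] by (rule polarization_diagonal)
  have "Poly_Mapping.lookup (?d - fprod f u) j = Suc (Poly_Mapping.lookup v0 j)"
    by (simp add: add.assoc lookup_add lookup_var)
  then have "polarization m f i j ?d c u \<noteq> 0"
    using diag[of u] lead unfolding coeff_leading_def by (simp del: of_nat_Suc)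
  moreover have "polarization m f i j ?d c w = 0" if "e_gt f w u" for w
    using diag[of w] that lead unfolding coeff_leading_def by simp
  ultimately show ?thesis
    unfolding coeff_leading_def by blast
qed

lemma coeff_boundary_exchange_eq_0:
  assumes cc: "coeff_cycle m f J t (d0 + var j) c"
    and s: "s \<subseteq> {1..m}" "mdvd (fprod f s) (d0 + var i)" "monom (d0 + var i - fprod f s) \<notin> J"
    and kl: "l \<in> s" "k \<in> {1..m} - s" "f k + var i = f l + var j"
  shows "coeff_boundary {1..m} c (insert k (s - {l})) = 0"
proof -
  let ?s' = "insert k (s - {l})"
  define e where "e = d0 + var i - fprod f s"
  have exch: "fprod f ?s' + var i = fprod f s + var j"
    using s(1) finite_subset kl by (intro fprod_exchange_var) auto
  have "(fprod f ?s' + e) + var i = (fprod f ?s' + var i) + e"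
    by (simp only: ac_simps)
  also have "\<dots> = (fprod f s + e) + var j"
    unfolding exch by (simp only: ac_simps)
  also have "\<dots> = (d0 + var j) + var i"
    unfolding e_def add_diff_mdvd[OF s(2)] by (simp only: ac_simps)
  finally have "d0 + var j = fprod f ?s' + e"
    by simp
  moreover have "?s' \<subseteq> {1..m}"
    using kl s(1) by auto
  ultimately show ?thesis
    using coeff_cycle_boundary[OF cc] s(3) unfolding e_def[symmetric] by simp
qed

section \<open>The ideals \<open>L\<^sub>u\<close>\<close>

definition init_exps :: "(nat \<Rightarrow> mon) \<Rightarrow> 'b::comm_ring_1 kelem set \<Rightarrow> nat set \<Rightarrow> mon set" where
  "init_exps f N u = {v. \<exists>g\<in>N. g \<noteq> (\<lambda>_. 0) \<and> init_term f g = (u, v)}"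

lemma init_module_coeff:
  assumes "h \<in> init_module n f J N" "Poly_Mapping.lookup (h u) v \<noteq> 0"
  shows "\<exists>w\<in>init_exps f N u. mdvd w v"
  using assms unfolding init_module_def
proof (induction arbitrary: u v rule: submod_gen.induct)
  case (sg_gen h)
  then obtain g where g: "h = term_elem J (init_term f g)" "g \<in> N" "g \<noteq> (\<lambda>_. 0)"
    by blast
  with sg_gen.prems have "init_term f g = (u, v)"
    unfolding term_elem_def
    by (cases "init_term f g") (auto simp: lookup_nf monom_def lookup_single when_def split: if_splits)
  with g show ?case
    unfolding init_exps_def by auto
next
  case (sg_add g h)
  then have "Poly_Mapping.lookup (g u) v \<noteq> 0 \<or> Poly_Mapping.lookup (h u) v \<noteq> 0"
    by (auto simp: lookup_add)
  with sg_add.IH show ?case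
    by blast
next
  case (sg_mult s g)
  then have "v \<in> Poly_Mapping.keys (s * g u)"
    by (auto simp: ksmult_def lookup_nf in_keys_iff split: if_splits)
  then obtain a b where ab: "v = a + b" "b \<in> Poly_Mapping.keys (g u)"
    using keys_mult by blast
  with sg_mult.IH obtain w where "w \<in> init_exps f N u" "mdvd w b"
    by (auto simp: in_keys_iff)
  with ab show ?case
    using mdvd_add_leftI by blast
qed simp

lemma init_exps_term_elem:
  assumes N: "N \<subseteq> koszul n m J t" and w: "w \<in> init_exps f N u"
  shows "is_mon n w" "term_elem J (u, w) \<in> init_module n f J N"
proof -
  obtain g where g: "g \<in> N" "g \<noteq> (\<lambda>_. 0)" "init_term f g = (u, w)"
    using w unfolding init_exps_def by blast
  then show "is_mon n w"
    using init_term_greatest(1)[of g n m J t f] kterms_koszul(3) N by (metis subsetD)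
  have "term_elem J (init_term f g) \<in> init_module n f J N"
    unfolding init_module_def using g by (blast intro: submod_gen.sg_gen)
  with g(3) show "term_elem J (u, w) \<in> init_module n f J N"
    by simp
qed

lemma term_elem_init_module:
  assumes "term_elem J (u, w) \<in> init_module n f J N" "monom w \<notin> J"
  shows "\<exists>w'\<in>init_exps f N u. mdvd w' w"
proof -
  have "Poly_Mapping.lookup (term_elem J (u, w) u) w \<noteq> 0"
    using assms(2) unfolding term_elem_def by (simp add: lookup_nf monom_def)
  with assms(1) show ?thesis
    by (rule init_module_coeff)
qed

lemma L_ideal_monom_iff:
  assumes J: "monomial_ideal n J" and N: "N \<subseteq> koszul n m J t" and v: "is_mon n v"
  shows "monom v \<in> L_ideal n f J N u \<longleftrightarrow> monom v \<in> J \<or> (\<exists>w\<in>init_exps f N u. mdvd w v)"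
proof -
  define W where "W = {w. is_mon n w \<and> term_elem J (u, w) \<in> init_module n f J N}"
  have "L_ideal n f J N u = ideal_gen n (J \<union> monom ` W)"
    unfolding L_ideal_def W_def by (simp add: setcompr_eq_image)
  moreover have "\<forall>w\<in>W. is_mon n w"
    unfolding W_def by blast
  ultimately have L: "monom v \<in> L_ideal n f J N u \<longleftrightarrow> monom v \<in> J \<or> (\<exists>w\<in>W. mdvd w v)"
    using monom_in_ideal_gen_iff[OF J _ v] by simp
  have "monom v \<in> J \<or> (\<exists>w'\<in>init_exps f N u. mdvd w' v)" if "w \<in> W" "mdvd w v" for w
  proof (cases "monom w \<in> J")
    case True
    then show ?thesis
      using monomial_ideal_mdvd[OF J _ that(2) v] by blast
  next
    case False
    then show ?thesis
      using term_elem_init_module[of J u w n f N] that mdvd_trans unfolding W_def by blast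
  qed
  moreover have "init_exps f N u \<subseteq> W"
    unfolding W_def using init_exps_term_elem[OF N] by blast
  ultimately show ?thesis
    unfolding L by blast
qed

section \<open>Borel-fixed ideals\<close>

locale borel_koszul =
  fixes n m :: nat and f :: "nat \<Rightarrow> mon" and I J :: "'a::field_char_0 mpoly set"
  assumes I_borel: "borel_fixed n I" and J_borel: "borel_fixed n J"
    and f_mon: "\<forall>i\<in>{1..m}. is_mon n (f i)"
    and f_gen: "I = ideal_gen n (monom ` f ` {1..m})"
    and f_minimal: "\<forall>i\<in>{1..m}. \<forall>j\<in>{1..m}. i \<noteq> j \<longrightarrow> \<not> mdvd (f i) (f j)"
    and f_deg: "\<forall>i\<in>{1..m}. \<forall>j\<in>{1..m}. mdeg (f i) = mdeg (f j)"
begin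

lemma J_monomial: "monomial_ideal n J"
  using J_borel unfolding borel_fixed_def by blast

lemma exchanged_generator:
  assumes ij: "1 \<le> i" "i < j" "j \<le> n" and k: "k \<in> {1..m}" and a: "f k = a + var j"
  shows "\<exists>l\<in>{1..m}. f l = a + var i"
proof -
  have a_mon: "is_mon n a"
    using bspec[OF f_mon k] unfolding a by simp
  have "monom (a + var j) \<in> I"
    unfolding f_gen a[symmetric] using k by (auto intro: ideal_gen.ig_gen)
  then have "monom (a + var i) \<in> ideal_gen n (monom ` f ` {1..m} :: 'a mpoly set)"
    using borel_fixedD[OF I_borel a_mon ij] unfolding f_gen by blast
  then obtain l where l: "l \<in> {1..m}" "mdvd (f l) (a + var i)"
    using monom_in_ideal_gen_mdvd[of "f ` {1..m}" n] f_mon by blast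
  have "mdeg (f l) = mdeg (f k)"
    using f_deg l(1) k by blast
  then have "mdeg (f l) = mdeg (a + var i)"
    unfolding a by (simp add: mdeg_add)
  with l show ?thesis
    using mdvd_mdeg_antisym by blast
qed

lemma unique_exchange_partner:
  assumes ij: "1 \<le> i" "i < j" "j \<le> n" and k: "k \<in> {1..m}" and kj: "Poly_Mapping.lookup (f k) j \<noteq> 0"
  shows "card {l\<in>{1..m}. f k + var i = f l + var j} = 1"
proof -
  obtain a where a: "f k = a + var j"
    using exists_var_summand[OF kj] by blast
  then obtain l where l: "l \<in> {1..m}" and fl: "f l = a + var i"
    using exchanged_generator[OF ij k] by blast
  have "{l\<in>{1..m}. f k + var i = f l + var j} = {l}"
  proof (intro set_eqI iffI)
    fix l'
    assume l': "l' \<in> {l\<in>{1..m}. f k + var i = f l + var j}"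
    then have "f l' + var j = (a + var i) + var j"
      unfolding a by (simp add: ac_simps)
    then have "f l' = f l"
      unfolding fl by (rule add_right_imp_eq)
    with l' l show "l' \<in> {l}"
      using f_minimal mdvd_refl by (metis mem_Collect_eq singleton_iff)
  qed (use l fl a in \<open>simp add: ac_simps\<close>)
  then show ?thesis
    by simp
qed

lemma coeff_boundary_eq_0_var_exchange:
  assumes ij: "1 \<le> i" "i < j" "j \<le> n"
    and cc: "coeff_cycle m f J t (d0 + var j) c" and d0: "is_mon n d0"
    and s: "s \<subseteq> {1..m}" "mdvd (fprod f s) (d0 + var i)" "monom (d0 + var i - fprod f s) \<notin> J"
  shows "coeff_boundary {1..m} c s = 0"
proof (cases "mdvd (fprod f s) (d0 + var j)")
  case True
  have "fprod f s + ((d0 + var i - fprod f s) + var j) = fprod f s + ((d0 + var j - fprod f s) + var i)"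
    unfolding add.assoc[symmetric] add_diff_mdvd[OF True] add_diff_mdvd[OF s(2)] by (simp only: ac_simps)
  then have eq: "(d0 + var i - fprod f s) + var j = (d0 + var j - fprod f s) + var i"
    by simp
  have "is_mon n (d0 + var j - fprod f s)"
    using d0 ij by (intro is_mon_diff) simp
  then have "monom (d0 + var j - fprod f s) \<notin> J"
    using borel_fixed_var_exchange[OF J_borel ij _ eq] s(3) by blast
  with True show ?thesis
    using coeff_cycle_boundary[OF cc s(1)] by blast
next
  case False
  have "c (insert x s) = 0" if "x \<in> {1..m} - s" for x
  proof (rule ccontr)
    assume "c (insert x s) \<noteq> 0"
    then have "mdvd (fprod f (insert x s)) (d0 + var j)"
      by (rule coeff_cycle_support(3)[OF cc])
    moreover have "finite s"
      using s(1) finite_subset by blast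
    then have "mdvd (fprod f s) (fprod f (insert x s))"
      using that by (simp add: fprod_insert)
    ultimately show False
      using False mdvd_trans by blast
  qed
  then show ?thesis
    unfolding coeff_boundary_def by simp
qed

lemma coeff_boundary_polarization_eq_0:
  assumes ij: "1 \<le> i" "i < j" "j \<le> n"
    and cc: "coeff_cycle m f J t (d0 + var j) c" and d0: "is_mon n d0"
    and s: "s \<subseteq> {1..m}" "mdvd (fprod f s) (d0 + var i)" "monom (d0 + var i - fprod f s) \<notin> J"
  shows "coeff_boundary {1..m} (polarization m f i j (d0 + var j) c) s = 0"
proof -
  let ?M = "{1..m}"
  let ?R = "\<lambda>k l. k \<in> ?M \<and> l \<in> ?M \<and> f k + var i = f l + var j"
  let ?\<alpha> = "\<lambda>w. of_nat (Poly_Mapping.lookup (d0 + var j - fprod f w) j) :: 'a"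
  let ?\<beta> = "\<lambda>k. of_nat (Poly_Mapping.lookup (f k) j) :: 'a"
  have \<alpha>: "\<forall>x\<in>?M - s. c (insert x s) \<noteq> 0 \<longrightarrow> ?\<alpha> (insert x s) = ?\<alpha> s - ?\<beta> x"
  proof (intro ballI impI)
    fix x
    assume "x \<in> ?M - s" "c (insert x s) \<noteq> 0"
    then have "d0 + var j - fprod f s = f x + (d0 + var j - fprod f (insert x s))"
      using s(1) finite_subset coeff_cycle_support(3)[OF cc] by (intro fprod_insert_diff) auto
    then show "?\<alpha> (insert x s) = ?\<alpha> s - ?\<beta> x"
      by (simp add: lookup_add)
  qed
  have \<beta>: "\<forall>k\<in>?M - s. ?\<beta> k \<noteq> 0 \<longrightarrow> card {l\<in>?M. ?R k l} = 1"
  proof (intro ballI impI)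
    fix k
    assume k: "k \<in> ?M - s" "?\<beta> k \<noteq> 0"
    then have "{l\<in>?M. ?R k l} = {l\<in>?M. f k + var i = f l + var j}"
      by auto
    with k show "card {l\<in>?M. ?R k l} = 1"
      using unique_exchange_partner[OF ij, of k] by simp
  qed
  have "coeff_boundary ?M (polarization m f i j (d0 + var j) c) s =
      polarization_op ?M ?R ?\<alpha> ?\<beta> (coeff_boundary ?M c) s"
    unfolding polarization_def using s(1) \<alpha> \<beta> ij by (intro coeff_boundary_polarization) auto
  also have "\<dots> = 0"
    unfolding polarization_op_def coeff_exchange_def
    using coeff_boundary_eq_0_var_exchange[OF ij cc d0 s] coeff_boundary_exchange_eq_0[OF cc s]
    by (simp add: sum.neutral)
  finally show ?thesis .
qed


lemma coeff_cycle_shift: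
  assumes ij: "1 \<le> i" "i < j" "j \<le> n"
    and cc: "coeff_cycle m f J t (fprod f u + v + var j) c" and lead: "coeff_leading f c u"
    and d0: "is_mon n (fprod f u + v)" and v_i: "monom (v + var i) \<notin> J"
  shows "\<exists>c'. coeff_cycle m f J t (fprod f u + v + var i) c' \<and> coeff_leading f c' u"
proof -
  let ?d' = "fprod f u + v + var i"
  let ?P = "polarization m f i j (fprod f u + v + var j) c"
  let ?c' = "\<lambda>w. if monom (?d' - fprod f w) \<in> J then 0 else ?P w"
  have "coeff_cycle m f J t ?d' ?c'"
    using J_monomial f_mon polarization_support[OF cc] coeff_boundary_polarization_eq_0[OF ij cc d0]
    by (rule coeff_cycle_restrict)
  moreover have "?d' - fprod f u = v + var i"
    by (simp add: add.assoc)
  then have "coeff_leading f ?c' u"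
    using polarization_leading[OF cc lead ij(2)] v_i unfolding coeff_leading_def by simp
  ultimately show ?thesis
    by blast
qed

lemma init_term_var_shift:
  assumes ij: "1 \<le> i" "i < j" "j \<le> n"
    and g: "g \<in> cycles n m f J t" "g \<noteq> (\<lambda>_. 0)" "init_term f g = (u, v + var j)"
  shows "monom (v + var i) \<in> J \<or> v + var i \<in> init_exps f (cycles n m f J t) u"
proof (cases "monom (v + var i) \<in> J")
  case v_i: False
  have K: "g \<in> koszul n m J t"
    using g(1) unfolding cycles_def by blast
  let ?c = "coeffs_at f g (fprod f u + (v + var j))"
  have cc: "coeff_cycle m f J t (fprod f u + v + var j) ?c"
    using coeff_cycle_coeffs_at[OF g(1)] by (simp add: add.assoc)
  have lead: "coeff_leading f ?c u"
    using K g(2,3) by (rule coeff_leading_init_term)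
  have "(u, v + var j) \<in> kterms g"
    using init_term_greatest(1)[OF K g(2), of f] g(3) by simp
  then have "u \<subseteq> {1..m}" "is_mon n (v + var j)"
    using kterms_koszul[OF K] by blast+
  then have d0: "is_mon n (fprod f u + v)"
    using f_mon is_mon_fprod[of u n f] by auto
  then obtain c' where c': "coeff_cycle m f J t (fprod f u + v + var i) c'" "coeff_leading f c' u"
    using coeff_cycle_shift[OF ij cc lead _ v_i] by blast
  have "is_mon n (fprod f u + v + var i)"
    using d0 ij by simp
  then obtain g' where "g' \<in> cycles n m f J t" "g' \<noteq> (\<lambda>_. 0)"
    "init_term f g' = (u, fprod f u + v + var i - fprod f u)"
    using cycle_of_coeff_cycle[OF c'] by blast
  then have "v + var i \<in> init_exps f (cycles n m f J t) u"
    unfolding init_exps_def by (auto simp: add.assoc)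
  then show ?thesis ..
qed simp

lemma init_exps_multiple_var_shift:
  assumes ij: "1 \<le> i" "i < j" "j \<le> n" and v: "is_mon n v"
    and v_j: "monom (v + var j) \<in> J \<or> (\<exists>w\<in>init_exps f (cycles n m f J t) u. mdvd w (v + var j))"
  shows "monom (v + var i) \<in> J \<or> (\<exists>w\<in>init_exps f (cycles n m f J t) u. mdvd w (v + var i))"
  using v_j
proof
  assume "monom (v + var j) \<in> J"
  then show ?thesis
    using borel_fixedD[OF J_borel v ij] by blast
next
  let ?E = "init_exps f (cycles n m f J t) u"
  assume "\<exists>w\<in>?E. mdvd w (v + var j)"
  then obtain w r where w: "w \<in> ?E" and r: "v + var j = w + r"
    unfolding mdvd_def by blast
  from r show ?thesis
  proof (cases rule: add_var_eq_add_cases)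
    case (1 r')
    then have "mdvd w (v + var i)"
      by (simp add: add.assoc)
    with w show ?thesis
      by blast
  next
    case (2 w1)
    then obtain g where "g \<in> cycles n m f J t" "g \<noteq> (\<lambda>_. 0)" "init_term f g = (u, w1 + var j)"
      using w unfolding init_exps_def by blast
    then have "monom (w1 + var i) \<in> J \<or> w1 + var i \<in> ?E"
      by (rule init_term_var_shift[OF ij])
    moreover have "mdvd (w1 + var i) (v + var i)"
      unfolding 2 mdvd_def by (intro exI[of _ r]) (simp add: ac_simps)
    moreover have "is_mon n (v + var i)"
      using v ij by simp
    ultimately show ?thesis
      using monomial_ideal_mdvd[OF J_monomial] by blast
  qed
qed

end

theorem lemma4p2:
  fixes n m t :: nat
    and f :: "nat \<Rightarrow> mon"
    and I J :: "'a::field_char_0 mpoly set"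
    and u :: "nat set"
  assumes I_borel: "borel_fixed n I"
    and J_borel: "borel_fixed n J"
    and f_mon: "\<forall>i\<in>{1..m}. is_mon n (f i)"
    and f_gen: "I = ideal_gen n (monom ` f ` {1..m})"
    and f_minimal: "\<forall>i\<in>{1..m}. \<forall>j\<in>{1..m}. i \<noteq> j \<longrightarrow> \<not> mdvd (f i) (f j)"
    and f_deg: "\<forall>i\<in>{1..m}. \<forall>j\<in>{1..m}. mdeg (f i) = mdeg (f j)"
    and u_sub: "u \<subseteq> {1..m}" and u_card: "card u = t"
  shows "borel_fixed n (L_ideal n f J (cycles n m f J t) u)"
proof -
  interpret borel_koszul n m f I J
    using I_borel J_borel f_mon f_gen f_minimal f_deg by unfold_locales
  let ?N = "cycles n m f J t"
  let ?L = "L_ideal n f J ?N u"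
  have N: "?N \<subseteq> koszul n m J t"
    unfolding cycles_def by blast
  have "monomial_ideal n ?L"
    unfolding L_ideal_def setcompr_eq_image[of monom] using J_monomial
    by (rule monomial_ideal_ideal_gen) blast
  moreover have "monom (v + var i) \<in> ?L"
    if "is_mon n v" "1 \<le> i" "i < j" "j \<le> n" "monom (v + var j) \<in> ?L" for v i j
    using that init_exps_multiple_var_shift L_ideal_monom_iff[OF J_monomial N] by simp
  ultimately show ?thesis
    unfolding borel_fixed_def by blast
qed

end
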